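(* Let $R$ be a semilocal commutative ring in which $2$ is invertible, $I$ an ideal of $R$, and $n\ge3$. Equip $R^{2n+1}$ with the standard form of matrix $\tilde\phi_{2n+1}=(2)\perp\widetilde{\psi}_n$. Let $u\in R^{2n+1}$ be an isotropic unimodular vector and $v\in I^{2n+1}$ with $\langle u,v\rangle=0$. Then $\sigma_{u,v}\in\mathrm{EO}_{2n+1}(R,I)$.
   Context: $e_{i,j}$ are matrix units and $\widetilde{\psi}_s=\sum_{i=1}^s(e_{2i-1,2i}+e_{2i,2i-1})$. On $R^{2n+1}$ the bilinear form is $\langle a,b\rangle=a^t\tilde\phi_{2n+1}b$ and the quadratic form is $q(a)=\tfrac12\langle a,a\rangle$. For $u,v$ with $u$ unimodular, $q(u)=0$, $\langle u,v\rangle=0$ and $r=q(v)$, the Eichler–Siegel–Dickson transvection is $\sigma_{u,v}(x)=x+\langle v,x\rangle u-\langle u,x\rangle v-r\langle u,x\rangle u$. Odd elementary orthogonal group: for $N=2s+1$ and $1\le i\le s$, $F^1_i(\lambda)=I_N+\lambda(e_{1,2i+1}-2e_{2i,1}-\lambda e_{2i,2i+1})$, $F^2_i(\lambda)=I_N+\lambda(e_{1,2i}-2e_{2i+1,1}-\lambda e_{2i+1,2i})$. $\mathrm{EO}_{2s+1}(R)$ is generated by these with $\lambda\in R$, $\mathrm{EO}_{2s+1}(I)$ by those with $\lambda\in I$, and $\mathrm{EO}_{2s+1}(R,I)$ is the normal closure of $\mathrm{EO}_{2s+1}(I)$ in $\mathrm{EO}_{2s+1}(R)$. *)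

theory Defs
  imports "Jordan_Normal_Form.Matrix"
begin

definition is_ideal :: "'a::comm_ring_1 set \<Rightarrow> bool" where
  "is_ideal I \<longleftrightarrow> 0 \<in> I \<and> (\<forall>a\<in>I. \<forall>b\<in>I. a + b \<in> I) \<and> (\<forall>r. \<forall>a\<in>I. r * a \<in> I)"

definition is_maximal_ideal :: "'a::comm_ring_1 set \<Rightarrow> bool" where
  "is_maximal_ideal M \<longleftrightarrow> is_ideal M \<and> M \<noteq> UNIV \<and>
     (\<forall>J. is_ideal J \<and> M \<subseteq> J \<longrightarrow> J = M \<or> J = UNIV)"

definition semilocal :: "'a::comm_ring_1 itself \<Rightarrow> bool" where
  "semilocal _ \<longleftrightarrow> finite {M::'a set. is_maximal_ideal M}"

definition two_invertible :: "'a::comm_ring_1 itself \<Rightarrow> bool" where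
  "two_invertible _ \<longleftrightarrow> (\<exists>h::'a. 2 * h = 1)"

text \<open>The inverse of 2 (meaningful when 2 is invertible).\<close>
definition half :: "'a::comm_ring_1" where
  "half = (SOME h. 2 * h = 1)"

text \<open>Matrix unit e_{i,j} of size N, with 1-based indices i, j (entry (i-1,j-1) in 0-based JNF indexing).\<close>
definition emat :: "nat \<Rightarrow> nat \<Rightarrow> nat \<Rightarrow> 'a::comm_ring_1 mat" where
  "emat N i j = mat N N (\<lambda>(a, b). if a + 1 = i \<and> b + 1 = j then 1 else 0)"

text \<open>The form matrix phi_{2n+1} = (2) \<perp> psi_n, where psi_n = sum_{i=1}^n (e_{2i-1,2i}+e_{2i,2i-1});
  in 1-based indices of size 2n+1: entry (1,1) is 2, entries (2i,2i+1), (2i+1,2i) are 1.\<close>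
definition phi_odd :: "nat \<Rightarrow> 'a::comm_ring_1 mat" where
  "phi_odd n = mat (2*n+1) (2*n+1) (\<lambda>(a, b).
     (if a + 1 = 1 \<and> b + 1 = 1 then 2 else 0) +
     (\<Sum>i\<in>{1..n}. (if a + 1 = 2*i \<and> b + 1 = 2*i+1 then 1 else 0)
                    + (if a + 1 = 2*i+1 \<and> b + 1 = 2*i then 1 else 0)))"

definition bform :: "nat \<Rightarrow> 'a::comm_ring_1 vec \<Rightarrow> 'a vec \<Rightarrow> 'a" where
  "bform n a b = a \<bullet> (phi_odd n *\<^sub>v b)"

definition qform :: "nat \<Rightarrow> 'a::comm_ring_1 vec \<Rightarrow> 'a" where
  "qform n a = half * bform n a a"

definition unimodular :: "nat \<Rightarrow> 'a::comm_ring_1 vec \<Rightarrow> bool" where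
  "unimodular N u \<longleftrightarrow> dim_vec u = N \<and> (\<exists>w::'a vec. dim_vec w = N \<and> w \<bullet> u = 1)"

definition esd_map :: "nat \<Rightarrow> 'a::comm_ring_1 vec \<Rightarrow> 'a vec \<Rightarrow> 'a vec \<Rightarrow> 'a vec" where
  "esd_map n u v x = x + bform n v x \<cdot>\<^sub>v u - bform n u x \<cdot>\<^sub>v v
      - (qform n v * bform n u x) \<cdot>\<^sub>v u"

definition esd :: "nat \<Rightarrow> 'a::comm_ring_1 vec \<Rightarrow> 'a vec \<Rightarrow> 'a mat" where
  "esd n u v = mat (2*n+1) (2*n+1) (\<lambda>(i, j). esd_map n u v (unit_vec (2*n+1) j) $ i)"

definition F1 :: "nat \<Rightarrow> nat \<Rightarrow> 'a::comm_ring_1 \<Rightarrow> 'a mat" where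
  "F1 s i l = 1\<^sub>m (2*s+1) + l \<cdot>\<^sub>m (emat (2*s+1) 1 (2*i+1) - 2 \<cdot>\<^sub>m emat (2*s+1) (2*i) 1
                                   - l \<cdot>\<^sub>m emat (2*s+1) (2*i) (2*i+1))"

definition F2 :: "nat \<Rightarrow> nat \<Rightarrow> 'a::comm_ring_1 \<Rightarrow> 'a mat" where
  "F2 s i l = 1\<^sub>m (2*s+1) + l \<cdot>\<^sub>m (emat (2*s+1) 1 (2*i) - 2 \<cdot>\<^sub>m emat (2*s+1) (2*i+1) 1
                                   - l \<cdot>\<^sub>m emat (2*s+1) (2*i+1) (2*i))"

inductive_set EO :: "nat \<Rightarrow> 'a::comm_ring_1 set \<Rightarrow> 'a mat set" for s J where
  one: "1\<^sub>m (2*s+1) \<in> EO s J"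
| gen1: "1 \<le> i \<Longrightarrow> i \<le> s \<Longrightarrow> l \<in> J \<Longrightarrow> F1 s i l \<in> EO s J"
| gen2: "1 \<le> i \<Longrightarrow> i \<le> s \<Longrightarrow> l \<in> J \<Longrightarrow> F2 s i l \<in> EO s J"
| mult: "A \<in> EO s J \<Longrightarrow> B \<in> EO s J \<Longrightarrow> A * B \<in> EO s J"
| inv: "A \<in> EO s J \<Longrightarrow> B \<in> carrier_mat (2*s+1) (2*s+1) \<Longrightarrow>
        A * B = 1\<^sub>m (2*s+1) \<Longrightarrow> B * A = 1\<^sub>m (2*s+1) \<Longrightarrow> B \<in> EO s J"

text \<open>EO_{2s+1}(R,I): normal closure of EO_{2s+1}(I) in EO_{2s+1}(R), i.e. the subgroup generated
  by all conjugates g X g^{-1} with g in EO(R), X in EO(I).\<close>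
inductive_set EO_rel :: "nat \<Rightarrow> 'a::comm_ring_1 set \<Rightarrow> 'a mat set" for s I where
  one: "1\<^sub>m (2*s+1) \<in> EO_rel s I"
| conj: "X \<in> EO s I \<Longrightarrow> g \<in> EO s UNIV \<Longrightarrow> h \<in> carrier_mat (2*s+1) (2*s+1) \<Longrightarrow>
         g * h = 1\<^sub>m (2*s+1) \<Longrightarrow> h * g = 1\<^sub>m (2*s+1) \<Longrightarrow> g * X * h \<in> EO_rel s I"
| mult: "A \<in> EO_rel s I \<Longrightarrow> B \<in> EO_rel s I \<Longrightarrow> A * B \<in> EO_rel s I"
| inv: "A \<in> EO_rel s I \<Longrightarrow> B \<in> carrier_mat (2*s+1) (2*s+1) \<Longrightarrow>
        A * B = 1\<^sub>m (2*s+1) \<Longrightarrow> B * A = 1\<^sub>m (2*s+1) \<Longrightarrow> B \<in> EO_rel s I"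

end

(* Conjugating the transvection sigma_{u,v} by an isometry g gives sigma_{g u, g v}, and sigma_{u,v}
   is additive in v. Over a semilocal ring in which 2 is invertible, EO_{2n+1}(R) acts transitively
   on isotropic unimodular vectors: each step moving u to the first hyperbolic basis vector e only has
   to be solved modulo each of the finitely many maximal ideals, and the local solutions glue by the
   Chinese remainder theorem. After this move v lies in I^{2n+1} and is orthogonal to e, so sigma_{e,v}
   is a product of transvections sigma_{e, c e_q} with c in I. For q = 0 these are generators F^1, F^2
   with parameter in I, for the remaining q commutators of such a generator with one over R. Hence
   sigma_{e,v}, and with it sigma_{u,v}, lies in the normal subgroup EO_{2n+1}(R,I) of EO_{2n+1}(R). *)

theory Submission
  imports Defs
begin

text \<open>Coordinates are 0-based: coordinate 0 carries the anisotropic entry 2 of \<open>phi_odd n\<close>,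
  and the hyperbolic pairs are \<open>(2i-1, 2i)\<close>. The only nonzero entry of row \<open>k\<close> of the form
  matrix is \<open>weight k\<close>, in column \<open>partner k\<close>.\<close>

definition partner :: "nat \<Rightarrow> nat" where
  "partner k = (if k = 0 then 0 else if odd k then k + 1 else k - 1)"

definition weight :: "nat \<Rightarrow> 'a::comm_ring_1" where
  "weight k = (if k = 0 then 2 else 1)"

lemma partner_partner [simp]: "partner (partner k) = k"
  unfolding partner_def by (auto elim!: oddE evenE)

lemma partner_less: "k < 2*n+1 \<Longrightarrow> partner k < 2*n+1"
  unfolding partner_def by (auto elim!: oddE)

lemma partner_0 [simp]: "partner 0 = 0"
  unfolding partner_def by simp

lemma partner_eq_iff [simp]: "partner a = partner b \<longleftrightarrow> a = b"
  by (metis partner_partner)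

lemma partner_eq_0_iff [simp]: "partner k = 0 \<longleftrightarrow> k = 0"
  unfolding partner_def by auto

lemma partner_eq_self_iff [simp]: "partner k = k \<longleftrightarrow> k = 0"
  unfolding partner_def by auto

lemma weight_partner [simp]: "weight (partner k) = weight k"
  unfolding partner_def weight_def by auto

lemma partner_odd: "1 \<le> i \<Longrightarrow> partner (2*i-1) = 2*i"
  unfolding partner_def by auto

lemma partner_even: "1 \<le> i \<Longrightarrow> partner (2*i) = 2*i-1"
  unfolding partner_def by auto

lemma partner_eq_iff_partner: "partner a = b \<longleftrightarrow> a = partner b"
  by auto

lemma sum_if_unique:
  assumes "finite A" "\<And>i. P i \<Longrightarrow> i = c"
  shows "(\<Sum>i\<in>A. if P i then x else (0::'a::comm_monoid_add)) = (if c \<in> A \<and> P c then x else 0)"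
proof -
  have "(\<lambda>i. if P i then x else (0::'a)) = (\<lambda>i. if i = c then (if P c then x else 0) else 0)"
    using assms(2) by (intro ext) auto
  then show ?thesis using assms(1) by (simp only:) simp
qed

lemma index_phi_odd:
  assumes "a < 2*n+1" "b < 2*n+1"
  shows "phi_odd n $$ (a,b) = (if b = partner a then weight a else (0::'a::comm_ring_1))"
proof -
  have s1: "(\<Sum>i\<in>{1..n}. if a + 1 = 2*i \<and> b + 1 = 2*i+1 then (1::'a) else 0)
     = (if (a+1) div 2 \<in> {1..n} \<and> a + 1 = 2*((a+1) div 2) \<and> b + 1 = 2*((a+1) div 2)+1 then 1 else 0)"
    by (rule sum_if_unique) auto
  have s2: "(\<Sum>i\<in>{1..n}. if a + 1 = 2*i+1 \<and> b + 1 = 2*i then (1::'a) else 0)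
     = (if a div 2 \<in> {1..n} \<and> a + 1 = 2*(a div 2)+1 \<and> b + 1 = 2*(a div 2) then 1 else 0)"
    by (rule sum_if_unique) auto
  have "phi_odd n $$ (a,b) = (if a = 0 \<and> b = 0 then 2 else 0) +
     ((\<Sum>i\<in>{1..n}. if a + 1 = 2*i \<and> b + 1 = 2*i+1 then (1::'a) else 0) +
      (\<Sum>i\<in>{1..n}. if a + 1 = 2*i+1 \<and> b + 1 = 2*i then 1 else 0))"
    using assms unfolding phi_odd_def by (simp add: sum.distrib)
  also have "\<dots> = (if b = partner a then weight a else 0)"
    unfolding s1 s2 using assms unfolding partner_def weight_def by (auto elim!: oddE evenE)
  finally show ?thesis .
qed

lemma index_phi_odd_mult_vec:
  assumes "dim_vec y = 2*n+1" "k < 2*n+1"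
  shows "(phi_odd n *\<^sub>v y) $ k = weight k * y $ partner k"
proof -
  have "(phi_odd n *\<^sub>v y) $ k = (\<Sum>j\<in>{0..<2*n+1}. phi_odd n $$ (k,j) * y $ j)"
    using assms by (simp add: phi_odd_def scalar_prod_def row_def)
  also have "\<dots> = (\<Sum>j\<in>{0..<2*n+1}. if j = partner k then weight k * y $ j else 0)"
    using assms by (intro sum.cong) (auto simp: index_phi_odd)
  also have "\<dots> = weight k * y $ partner k"
    using partner_less[OF assms(2)] by simp
  finally show ?thesis .
qed

lemma bform_expand:
  assumes "dim_vec y = 2*n+1"
  shows "bform n x y = (\<Sum>k<2*n+1. weight k * x$k * y$partner k)"
proof -
  have "bform n x y = (\<Sum>k\<in>{0..<2*n+1}. x $ k * (phi_odd n *\<^sub>v y) $ k)"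
    unfolding bform_def scalar_prod_def by (simp add: phi_odd_def)
  then show ?thesis
    using assms by (auto simp: index_phi_odd_mult_vec atLeast0LessThan intro!: sum.cong)
qed

lemma bform_commute:
  assumes "dim_vec x = 2*n+1" "dim_vec y = 2*n+1"
  shows "bform n x y = bform n y x"
proof -
  have "bform n x y = (\<Sum>k<2*n+1. weight (partner k) * x $ partner k * y $ partner (partner k))"
    unfolding bform_expand[OF assms(2)]
    by (rule sum.reindex_bij_witness[where i=partner and j=partner]) (use partner_less[of _ n] in auto)
  also have "\<dots> = bform n y x"
    unfolding bform_expand[OF assms(1)] by (auto simp: ac_simps intro!: sum.cong)
  finally show ?thesis .
qed

lemma bform_add_left:
  assumes "dim_vec x = 2*n+1" "dim_vec x' = 2*n+1" "dim_vec y = 2*n+1"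
  shows "bform n (x + x') y = bform n x y + bform n x' y"
  using assms by (simp add: bform_expand sum.distrib[symmetric] algebra_simps)

lemma bform_diff_left:
  assumes "dim_vec x = 2*n+1" "dim_vec x' = 2*n+1" "dim_vec y = 2*n+1"
  shows "bform n (x - x') y = bform n x y - bform n x' y"
  unfolding bform_expand[OF assms(3)] using assms
  by (simp add: sum_subtractf[symmetric] algebra_simps del: sum.lessThan_Suc)

lemma bform_smult_left:
  assumes "dim_vec x = 2*n+1" "dim_vec y = 2*n+1"
  shows "bform n (c \<cdot>\<^sub>v x) y = c * bform n x y"
  using assms by (simp add: bform_expand sum_distrib_left algebra_simps)

lemma bform_add_right:
  assumes "dim_vec x = 2*n+1" "dim_vec y = 2*n+1" "dim_vec y' = 2*n+1"
  shows "bform n x (y + y') = bform n x y + bform n x y'"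
  using assms by (simp add: bform_commute[of x n] bform_add_left)

lemma bform_smult_right:
  assumes "dim_vec x = 2*n+1" "dim_vec y = 2*n+1"
  shows "bform n x (c \<cdot>\<^sub>v y) = c * bform n x y"
  using assms by (simp add: bform_commute[of x n] bform_smult_left)

text \<open>The dimension is a separate variable \<open>N\<close> so that these lemmas still apply after the
  simplifier has rewritten \<open>2*n+1\<close> to \<open>Suc (2*n)\<close>.\<close>

lemma bform_unit_left:
  assumes "N = 2*n+1" "dim_vec y = N" "p < N"
  shows "bform n (unit_vec N p) y = weight p * y $ partner p"
  using assms by (simp add: bform_expand if_distrib if_distribR cong: if_cong)

lemma bform_unit_right:
  assumes "N = 2*n+1" "dim_vec x = N" "p < N"
  shows "bform n x (unit_vec N p) = weight p * x $ partner p"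
  using bform_commute[of x n "unit_vec N p"] bform_unit_left[OF assms] assms by simp

lemma two_times_half:
  assumes "two_invertible TYPE('a::comm_ring_1)"
  shows "2 * (half::'a) = 1"
  using assms unfolding two_invertible_def half_def by (rule someI_ex)

lemma bform_self:
  assumes "two_invertible TYPE('a::comm_ring_1)"
  shows "bform n x x = 2 * qform n (x :: 'a vec)"
  using two_times_half[OF assms] by (simp add: qform_def mult.assoc[symmetric])

lemma qform_add:
  assumes "two_invertible TYPE('a::comm_ring_1)" "dim_vec v = 2*n+1" "dim_vec w = 2*n+1"
  shows "qform n (v + w) = qform n v + qform n w + bform n v (w :: 'a vec)"
proof -
  have "bform n (v + w) (v + w) = bform n v v + bform n w w + 2 * bform n v w"
    using assms by (simp add: bform_add_left bform_add_right bform_commute[of w n v] algebra_simps)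
  then have "qform n (v + w) = qform n v + qform n w + (2 * half) * bform n v w"
    unfolding qform_def by (simp add: algebra_simps)
  then show ?thesis using two_times_half[OF assms(1)] by simp
qed

lemma qform_smult:
  assumes "dim_vec v = 2*n+1"
  shows "qform n (c \<cdot>\<^sub>v v) = c * c * qform n v"
  using assms by (simp add: qform_def bform_smult_left bform_smult_right algebra_simps)

lemma qform_unit:
  assumes "two_invertible TYPE('a::comm_ring_1)" "N = 2*n+1" "p < N"
  shows "qform n (unit_vec N p :: 'a vec) = (if p = 0 then 1 else 0)"
  using two_times_half[OF assms(1)] bform_unit_left[of N n "unit_vec N p :: 'a vec" p] assms
    partner_less[of p n] by (cases "p = 0") (simp_all add: qform_def weight_def mult.commute)

lemma dim_esd_map [simp]: "dim_vec (esd_map n u v x) = dim_vec u"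
  by (simp add: esd_map_def)

lemma index_esd_map:
  assumes "dim_vec x = 2*n+1" "dim_vec u = 2*n+1" "dim_vec v = 2*n+1" "k < 2*n+1"
  shows "esd_map n u v x $ k = x$k + bform n v x * u$k - bform n u x * v$k - qform n v * bform n u x * u$k"
  using assms by (simp add: esd_map_def)

lemma bform_esd_map_left:
  assumes "dim_vec x = 2*n+1" "dim_vec u = 2*n+1" "dim_vec v = 2*n+1" "dim_vec z = 2*n+1"
  shows "bform n (esd_map n u v x) z = bform n x z + bform n v x * bform n u z
     - bform n u x * bform n v z - qform n v * bform n u x * bform n u z"
  using assms by (simp add: esd_map_def bform_add_left bform_diff_left bform_smult_left)

lemma esd_map_isometry:
  assumes "two_invertible TYPE('a::comm_ring_1)"
    and dims: "dim_vec u = 2*n+1" "dim_vec v = 2*n+1" "dim_vec x = 2*n+1" "dim_vec y = 2*n+1"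
    and "qform n u = 0" "bform n u v = 0"
  shows "bform n (esd_map n u v x) (esd_map n u v y) = bform n x (y :: 'a vec)"
proof -
  have uu: "bform n u u = 0" and vu: "bform n v u = 0" and vv: "bform n v v = 2 * qform n v"
    using assms bform_self[OF assms(1)] bform_commute[of v n u] by simp_all
  have right: "bform n z (esd_map n u v y) = bform n z y + bform n v y * bform n u z
     - bform n u y * bform n v z - qform n v * bform n u y * bform n u z" if "dim_vec z = 2*n+1" for z
    using bform_esd_map_left[OF dims(4,1,2) that] bform_commute[OF that, of "esd_map n u v y"]
      bform_commute[OF that, of y] bform_commute[OF that, of u] bform_commute[OF that, of v] dims by simp
  have "bform n (esd_map n u v x) (esd_map n u v y) = bform n x (esd_map n u v y)
     + bform n v x * bform n u (esd_map n u v y) - bform n u x * bform n v (esd_map n u v y)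
     - qform n v * bform n u x * bform n u (esd_map n u v y)"
    using dims by (simp add: bform_esd_map_left)
  also have "\<dots> = bform n x y"
    unfolding right[OF dims(3)] right[OF dims(1)] right[OF dims(2)] using assms uu vu vv
    by (simp add: algebra_simps)
  finally show ?thesis .
qed

lemma esd_map_add:
  assumes "two_invertible TYPE('a::comm_ring_1)"
    and dims: "dim_vec u = 2*n+1" "dim_vec v = 2*n+1" "dim_vec w = 2*n+1" "dim_vec x = 2*n+1"
    and "qform n u = 0" "bform n u v = 0" "bform n u w = 0"
  shows "esd_map n u v (esd_map n u w x) = esd_map n u (v + w) (x :: 'a vec)"
proof (rule eq_vecI)
  have "bform n u u = 0" using assms bform_self[OF assms(1)] by simp
  then have uy: "bform n u (esd_map n u w x) = bform n u x"
    using assms bform_esd_map_left[OF dims(4,1,3,1)] bform_commute[of u n "esd_map n u w x"]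
      bform_commute[of w n u] bform_commute[of x n u] by simp
  have vy: "bform n v (esd_map n u w x) = bform n v x - bform n u x * bform n v w"
    using assms bform_esd_map_left[OF dims(4,1,3,2)] bform_commute[of v n "esd_map n u w x"]
      bform_commute[of x n v] bform_commute[of w n v] by simp
  fix k assume "k < dim_vec (esd_map n u (v + w) x)"
  then show "esd_map n u v (esd_map n u w x) $ k = esd_map n u (v + w) x $ k"
    using assms by (simp add: index_esd_map bform_add_left qform_add uy vy algebra_simps)
qed simp

lemma esd_map_smult_self:
  assumes "two_invertible TYPE('a::comm_ring_1)"
    and "dim_vec u = 2*n+1" "dim_vec x = 2*n+1" "qform n u = 0"
  shows "esd_map n u (c \<cdot>\<^sub>v u) x = (x :: 'a vec)"
proof (rule eq_vecI)
  fix k assume "k < dim_vec x"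
  then show "esd_map n u (c \<cdot>\<^sub>v u) x $ k = x $ k"
    using assms by (simp add: index_esd_map bform_smult_left qform_smult algebra_simps)
qed (use assms in simp)

lemma esd_dims [simp]: "dim_row (esd n u v) = 2*n+1" "dim_col (esd n u v) = 2*n+1"
  unfolding esd_def by simp_all

lemma esd_carrier [simp]: "esd n u v \<in> carrier_mat (2*n+1) (2*n+1)"
  unfolding carrier_mat_def by simp

lemma eq_matI_mult_mat_vec:
  assumes "A \<in> carrier_mat m m" "B \<in> carrier_mat m m"
    and "\<And>x. dim_vec x = m \<Longrightarrow> A *\<^sub>v x = B *\<^sub>v x"
  shows "A = (B :: 'a::comm_ring_1 mat)"
proof (rule eq_matI)
  have col: "C $$ (i,j) = (C *\<^sub>v unit_vec m j) $ i"
    if "C \<in> carrier_mat m m" "i < m" "j < m" for C :: "'a mat" and i j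
  proof -
    have "(C *\<^sub>v unit_vec m j) $ i = (\<Sum>k\<in>{0..<m}. C $$ (i,k) * (if k = j then 1 else 0))"
      using that by (simp add: scalar_prod_def row_def)
    also have "\<dots> = C $$ (i,j)" using that by (simp add: if_distrib cong: if_cong)
    finally show ?thesis by simp
  qed
  fix i j assume "i < dim_row B" "j < dim_col B"
  then have ij: "i < m" "j < m" using assms by auto
  have "A $$ (i,j) = (A *\<^sub>v unit_vec m j) $ i" using assms ij by (intro col)
  also have "\<dots> = (B *\<^sub>v unit_vec m j) $ i" using assms(3)[of "unit_vec m j"] by simp
  also have "\<dots> = B $$ (i,j)" using assms ij by (intro col[symmetric])
  finally show "A $$ (i,j) = B $$ (i,j)" .
qed (use assms in auto)

lemma index_esd:
  assumes "dim_vec u = 2*n+1" "dim_vec v = 2*n+1" "i < 2*n+1" "j < 2*n+1"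
  shows "esd n u v $$ (i,j) = (if j = i then 1 else 0) + weight j * v$partner j * u$i
     - weight j * u$partner j * v$i - qform n v * (weight j * u$partner j) * u$i"
  using assms by (simp add: esd_def esd_map_def bform_unit_right)

lemma esd_mult_mat_vec:
  assumes "dim_vec u = 2*n+1" "dim_vec v = 2*n+1" "dim_vec x = 2*n+1"
  shows "esd n u v *\<^sub>v x = esd_map n u v x"
proof (rule eq_vecI)
  fix i assume "i < dim_vec (esd_map n u v x)"
  then have i: "i < 2*n+1" using assms by simp
  have "(esd n u v *\<^sub>v x) $ i = (\<Sum>j<2*n+1. (if j = i then x $ j else 0)
      + u$i * (weight j * x$j * v$partner j) - v$i * (weight j * x$j * u$partner j)
      - qform n v * u$i * (weight j * x$j * u$partner j))"
  proof -
    have "(esd n u v *\<^sub>v x) $ i = (\<Sum>j\<in>{0..<2*n+1}. esd n u v $$ (i,j) * x$j)"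
      using assms i by (simp add: scalar_prod_def row_def)
    then show ?thesis
      using assms i by (auto simp: index_esd atLeast0LessThan algebra_simps intro!: sum.cong)
  qed
  also have "\<dots> = x $ i + u$i * bform n x v - v$i * bform n x u - qform n v * u$i * bform n x u"
    using i assms by (simp add: sum.distrib sum_subtractf sum_distrib_left[symmetric] bform_expand
        del: sum.lessThan_Suc)
  also have "\<dots> = esd_map n u v x $ i"
    using assms i bform_commute[of x n u] bform_commute[of x n v] by (simp add: index_esd_map algebra_simps)
  finally show "(esd n u v *\<^sub>v x) $ i = esd_map n u v x $ i" .
qed (use assms in \<open>simp add: esd_def\<close>)

lemma esd_mult_esd:
  assumes "two_invertible TYPE('a::comm_ring_1)"
    and "dim_vec u = 2*n+1" "dim_vec v = 2*n+1" "dim_vec w = 2*n+1"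
    and "qform n u = 0" "bform n u v = 0" "bform n u w = 0"
  shows "esd n u v * esd n u w = esd n u (v + (w :: 'a vec))"
proof (rule eq_matI_mult_mat_vec)
  fix x :: "'a vec" assume x: "dim_vec x = 2*n+1"
  have "(esd n u v * esd n u w) *\<^sub>v x = esd n u v *\<^sub>v (esd n u w *\<^sub>v x)"
    by (rule assoc_mult_mat_vec[OF esd_carrier esd_carrier carrier_vecI[OF x]])
  also have "\<dots> = esd_map n u v (esd_map n u w x)"
    using assms x by (simp add: esd_mult_mat_vec)
  also have "\<dots> = esd_map n u (v + w) x"
    using assms x by (intro esd_map_add)
  also have "\<dots> = esd n u (v + w) *\<^sub>v x"
    using assms x by (simp add: esd_mult_mat_vec)
  finally show "(esd n u v * esd n u w) *\<^sub>v x = esd n u (v + w) *\<^sub>v x" .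
next
  show "esd n u v * esd n u w \<in> carrier_mat (2*n+1) (2*n+1)"
    by (rule mult_carrier_mat[OF esd_carrier esd_carrier])
qed (rule esd_carrier)

lemma esd_smult_self:
  assumes "two_invertible TYPE('a::comm_ring_1)"
    and "dim_vec (u :: 'a vec) = 2*n+1" "qform n u = 0"
  shows "esd n u (c \<cdot>\<^sub>v u) = 1\<^sub>m (2*n+1)"
proof (rule eq_matI_mult_mat_vec)
  fix x :: "'a vec" assume x: "dim_vec x = 2*n+1"
  then show "esd n u (c \<cdot>\<^sub>v u) *\<^sub>v x = 1\<^sub>m (2*n+1) *\<^sub>v x"
    using assms one_mult_mat_vec[OF carrier_vecI[OF x]] by (simp add: esd_mult_mat_vec esd_map_smult_self)
qed (rule esd_carrier, simp)

lemma mult_mat_vec_smult_comm: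
  assumes "A \<in> carrier_mat nr nc" "v \<in> carrier_vec nc"
  shows "A *\<^sub>v (k \<cdot>\<^sub>v v) = k \<cdot>\<^sub>v (A *\<^sub>v (v :: 'a::comm_semiring_0 vec))"
  using assms by (intro eq_vecI) auto

lemma mult_mat_vec_esd_map:
  assumes g: "g \<in> carrier_mat (2*n+1) (2*n+1)"
    and "dim_vec u = 2*n+1" "dim_vec v = 2*n+1" "dim_vec y = 2*n+1"
  shows "g *\<^sub>v esd_map n u v y = g *\<^sub>v y + bform n v y \<cdot>\<^sub>v (g *\<^sub>v u) - bform n u y \<cdot>\<^sub>v (g *\<^sub>v v)
    - (qform n v * bform n u y) \<cdot>\<^sub>v (g *\<^sub>v u)"
proof -
  have "u \<in> carrier_vec (2*n+1)" "v \<in> carrier_vec (2*n+1)" "y \<in> carrier_vec (2*n+1)"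
    using assms carrier_vecI by blast+
  then show ?thesis
    unfolding esd_map_def
    by (simp add: mult_add_distrib_mat_vec[OF g] mult_minus_distrib_mat_vec[OF g]
        mult_mat_vec_smult_comm[OF g])
qed

lemma esd_conjugate:
  assumes "dim_vec u = 2*n+1" "dim_vec v = 2*n+1"
    and g: "g \<in> carrier_mat (2*n+1) (2*n+1)" and h: "h \<in> carrier_mat (2*n+1) (2*n+1)"
    and gh: "g * h = 1\<^sub>m (2*n+1)"
    and isometry: "\<And>x y. dim_vec x = 2*n+1 \<Longrightarrow> dim_vec y = 2*n+1 \<Longrightarrow>
        bform n (g *\<^sub>v x) (g *\<^sub>v y) = bform n x y"
  shows "g * esd n u v * h = esd n (g *\<^sub>v u) (g *\<^sub>v (v :: 'a::comm_ring_1 vec))"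
proof (rule eq_matI_mult_mat_vec)
  fix x :: "'a vec" assume x: "dim_vec x = 2*n+1"
  let ?y = "h *\<^sub>v x"
  have y: "dim_vec ?y = 2*n+1" using h by simp
  have gy: "g *\<^sub>v ?y = x"
    using assoc_mult_mat_vec[OF g h carrier_vecI[OF x]] one_mult_mat_vec[OF carrier_vecI[OF x]] gh
    by simp
  have "(g * esd n u v * h) *\<^sub>v x = g *\<^sub>v esd_map n u v ?y"
    using assoc_mult_mat_vec[OF mult_carrier_mat[OF g esd_carrier] h carrier_vecI[OF x]]
      assoc_mult_mat_vec[OF g esd_carrier carrier_vecI[OF y]] esd_mult_mat_vec[OF assms(1,2) y] by simp
  also have "\<dots> = esd_map n (g *\<^sub>v u) (g *\<^sub>v v) x"
    unfolding mult_mat_vec_esd_map[OF g assms(1,2) y] gy unfolding esd_map_def qform_def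
    using isometry[OF assms(1) y] isometry[OF assms(2) y] isometry[OF assms(2,2)] gy by simp
  also have "\<dots> = esd n (g *\<^sub>v u) (g *\<^sub>v v) *\<^sub>v x"
    using g x by (simp add: esd_mult_mat_vec)
  finally show "(g * esd n u v * h) *\<^sub>v x = esd n (g *\<^sub>v u) (g *\<^sub>v v) *\<^sub>v x" .
qed (use g h in auto)

lemma F1_eq_esd:
  assumes "two_invertible TYPE('a::comm_ring_1)" "1 \<le> i" "i \<le> n"
  shows "F1 n i l = esd n (unit_vec (2*n+1) (2*i-1)) ((-l) \<cdot>\<^sub>v unit_vec (2*n+1) 0 :: 'a vec)"
proof (rule eq_matI)
  fix a b assume "a < dim_row (esd n (unit_vec (2*n+1) (2*i-1)) ((-l) \<cdot>\<^sub>v unit_vec (2*n+1) 0 :: 'a vec))"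
    "b < dim_col (esd n (unit_vec (2*n+1) (2*i-1)) ((-l) \<cdot>\<^sub>v unit_vec (2*n+1) 0 :: 'a vec))"
  then show "F1 n i l $$ (a,b) = esd n (unit_vec (2*n+1) (2*i-1)) ((-l) \<cdot>\<^sub>v unit_vec (2*n+1) 0) $$ (a,b)"
    using assms qform_unit[OF assms(1), of "2*n+1" n 0] partner_odd[OF assms(2)] partner_even[OF assms(2)]
      partner_less[of b n] partner_eq_iff_partner[of b]
    by (auto simp: index_esd F1_def emat_def qform_smult weight_def)
qed (simp_all add: F1_def emat_def)

lemma F2_eq_esd:
  assumes "two_invertible TYPE('a::comm_ring_1)" "1 \<le> i" "i \<le> n"
  shows "F2 n i l = esd n (unit_vec (2*n+1) (2*i)) ((-l) \<cdot>\<^sub>v unit_vec (2*n+1) 0 :: 'a vec)"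
proof (rule eq_matI)
  fix a b assume "a < dim_row (esd n (unit_vec (2*n+1) (2*i)) ((-l) \<cdot>\<^sub>v unit_vec (2*n+1) 0 :: 'a vec))"
    "b < dim_col (esd n (unit_vec (2*n+1) (2*i)) ((-l) \<cdot>\<^sub>v unit_vec (2*n+1) 0 :: 'a vec))"
  then show "F2 n i l $$ (a,b) = esd n (unit_vec (2*n+1) (2*i)) ((-l) \<cdot>\<^sub>v unit_vec (2*n+1) 0) $$ (a,b)"
    using assms qform_unit[OF assms(1), of "2*n+1" n 0] partner_odd[OF assms(2)] partner_even[OF assms(2)]
      partner_less[of b n] partner_eq_iff_partner[of b]
    by (auto simp: index_esd F2_def emat_def qform_smult weight_def)
qed (simp_all add: F2_def emat_def)

lemma esd_isometry:
  assumes "two_invertible TYPE('a::comm_ring_1)"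
    and "dim_vec u = 2*n+1" "dim_vec v = 2*n+1" "dim_vec x = 2*n+1" "dim_vec y = 2*n+1"
    and "qform n u = 0" "bform n u v = 0"
  shows "bform n (esd n u v *\<^sub>v x) (esd n u v *\<^sub>v y) = bform n x (y :: 'a vec)"
  using assms by (simp add: esd_mult_mat_vec esd_map_isometry)

lemma esd_unit_unit_isometry:
  assumes "two_invertible TYPE('a::comm_ring_1)" "0 < p" "p < 2*n+1" "q < 2*n+1" "q \<noteq> partner p"
    and "dim_vec x = 2*n+1" "dim_vec y = 2*n+1"
  shows "bform n (esd n (unit_vec (2*n+1) p) (c \<cdot>\<^sub>v unit_vec (2*n+1) q) *\<^sub>v x)
           (esd n (unit_vec (2*n+1) p) (c \<cdot>\<^sub>v unit_vec (2*n+1) q) *\<^sub>v y) = bform n x (y :: 'a vec)"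
  using assms partner_less[of p n] not_sym[OF assms(5)]
  by (intro esd_isometry) (simp_all add: qform_unit bform_unit_left)

lemma EO_carrier: "A \<in> EO n J \<Longrightarrow> A \<in> carrier_mat (2*n+1) (2*n+1)"
  by (induction rule: EO.induct) (auto simp: F1_def F2_def emat_def)

lemma EO_mono: "A \<in> EO n J \<Longrightarrow> J \<subseteq> K \<Longrightarrow> A \<in> EO n K"
  by (induction rule: EO.induct) (auto intro: EO.intros)

lemma EO_isometry:
  assumes "two_invertible TYPE('a::comm_ring_1)" "A \<in> EO n J"
    and "dim_vec x = 2*n+1" "dim_vec y = 2*n+1"
  shows "bform n (A *\<^sub>v x) (A *\<^sub>v y) = bform n x (y :: 'a vec)"
  using assms(2-)
proof (induction arbitrary: x y rule: EO.induct)
  case one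
  then show ?case using one_mult_mat_vec carrier_vecI by metis
next
  case (gen1 i l)
  then show ?case
    using esd_unit_unit_isometry[OF assms(1), of "2*i-1" n 0] F1_eq_esd[OF assms(1)] partner_odd by simp
next
  case (gen2 i l)
  then show ?case
    using esd_unit_unit_isometry[OF assms(1), of "2*i" n 0] F2_eq_esd[OF assms(1)] partner_even by simp
next
  case (mult A B)
  have "A \<in> carrier_mat (2*n+1) (2*n+1)" "B \<in> carrier_mat (2*n+1) (2*n+1)"
    using mult EO_carrier by blast+
  then show ?case
    using mult.IH mult.prems carrier_vecI[OF mult.prems(1)] carrier_vecI[OF mult.prems(2)] by simp
next
  case (inv A B)
  have "A \<in> carrier_mat (2*n+1) (2*n+1)" using inv EO_carrier by blast
  then have "bform n (B *\<^sub>v x) (B *\<^sub>v y) = bform n ((A * B) *\<^sub>v x) ((A * B) *\<^sub>v y)"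
    using inv.IH inv.hyps(2) inv.prems carrier_vecI[OF inv.prems(1)] carrier_vecI[OF inv.prems(2)]
    by simp
  then show ?case
    using inv.hyps(3) inv.prems carrier_vecI[OF inv.prems(1)] carrier_vecI[OF inv.prems(2)] by simp
qed

lemma esd_unit_unit0_inverse:
  assumes "two_invertible TYPE('a::comm_ring_1)" "0 < p" "p < 2*n+1"
  shows "esd n (unit_vec (2*n+1) p) (c \<cdot>\<^sub>v unit_vec (2*n+1) 0)
       * esd n (unit_vec (2*n+1) p) ((-c) \<cdot>\<^sub>v unit_vec (2*n+1) 0) = (1\<^sub>m (2*n+1) :: 'a mat)"
proof -
  have "c \<cdot>\<^sub>v unit_vec (2*n+1) 0 + (-c) \<cdot>\<^sub>v unit_vec (2*n+1) 0 = 0 \<cdot>\<^sub>v (unit_vec (2*n+1) p :: 'a vec)"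
    by (intro eq_vecI) auto
  then show ?thesis
    using assms partner_less[of p n]
    by (simp add: esd_mult_esd esd_smult_self qform_unit bform_unit_left)
qed

lemma mult_mat_inverse_cancel:
  assumes "A * B = 1\<^sub>m m" "A \<in> carrier_mat m m" "B \<in> carrier_mat m m" "Z \<in> carrier_mat m k"
  shows "A * (B * Z) = (Z :: 'a::semiring_1 mat)"
  using assms by (metis assoc_mult_mat left_mult_one_mat)

lemma mult_mat_inverse_product:
  assumes "A * A' = 1\<^sub>m m" "B * B' = 1\<^sub>m m"
    and "A \<in> carrier_mat m m" "A' \<in> carrier_mat m m" "B \<in> carrier_mat m m" "B' \<in> carrier_mat m m"
  shows "(A * B) * (B' * A') = (1\<^sub>m m :: 'a::semiring_1 mat)"
proof -
  have "(A * B) * (B' * A') = A * (B * (B' * A'))"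
    using assms by (metis assoc_mult_mat mult_carrier_mat)
  also have "\<dots> = 1\<^sub>m m"
    using assms mult_mat_inverse_cancel[of B B' m "A'" m] by simp
  finally show ?thesis .
qed

lemma EO_invertible:
  assumes "two_invertible TYPE('a::comm_ring_1)" "A \<in> EO n J" "\<And>l. l \<in> J \<Longrightarrow> -l \<in> J"
  shows "\<exists>B\<in>EO n J. A * B = 1\<^sub>m (2*n+1) \<and> B * A = (1\<^sub>m (2*n+1) :: 'a mat)"
  using assms(2)
proof (induction rule: EO.induct)
  case one
  have "1\<^sub>m (2*n+1) \<in> EO n J" by (rule EO.one)
  then show ?case by (intro bexI[of _ "1\<^sub>m (2*n+1)"]) auto
next
  case (gen1 i l)
  have "F1 n i (-l) \<in> EO n J" using gen1 assms(3) by (intro EO.gen1)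
  moreover have "F1 n i l * F1 n i (-l) = 1\<^sub>m (2*n+1)" "F1 n i (-l) * F1 n i l = 1\<^sub>m (2*n+1)"
    using gen1 esd_unit_unit0_inverse[OF assms(1), of "2*i-1" n "-l"]
      esd_unit_unit0_inverse[OF assms(1), of "2*i-1" n l] by (simp_all add: F1_eq_esd[OF assms(1)])
  ultimately show ?case by blast
next
  case (gen2 i l)
  have "F2 n i (-l) \<in> EO n J" using gen2 assms(3) by (intro EO.gen2)
  moreover have "F2 n i l * F2 n i (-l) = 1\<^sub>m (2*n+1)" "F2 n i (-l) * F2 n i l = 1\<^sub>m (2*n+1)"
    using gen2 esd_unit_unit0_inverse[OF assms(1), of "2*i" n "-l"]
      esd_unit_unit0_inverse[OF assms(1), of "2*i" n l] by (simp_all add: F2_eq_esd[OF assms(1)])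
  ultimately show ?case by blast
next
  case (mult A B)
  obtain A' where A': "A' \<in> EO n J" "A * A' = 1\<^sub>m (2*n+1)" "A' * A = 1\<^sub>m (2*n+1)"
    using mult.IH(1) by blast
  obtain B' where B': "B' \<in> EO n J" "B * B' = 1\<^sub>m (2*n+1)" "B' * B = 1\<^sub>m (2*n+1)"
    using mult.IH(2) by blast
  have c: "A \<in> carrier_mat (2*n+1) (2*n+1)" "B \<in> carrier_mat (2*n+1) (2*n+1)"
    "A' \<in> carrier_mat (2*n+1) (2*n+1)" "B' \<in> carrier_mat (2*n+1) (2*n+1)"
    using mult.hyps A'(1) B'(1) EO_carrier by blast+
  have "(A * B) * (B' * A') = 1\<^sub>m (2*n+1)" "(B' * A') * (A * B) = 1\<^sub>m (2*n+1)"
    using mult_mat_inverse_product[OF A'(2) B'(2) c(1,3,2,4)]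
      mult_mat_inverse_product[OF B'(3) A'(3) c(4,2,3,1)]
    by simp_all
  then show ?case using A' B' by (intro bexI[of _ "B' * A'"]) (auto intro: EO.mult)
next
  case (inv A B)
  then show ?case by blast
qed

lemma EO_rel_carrier: "A \<in> EO_rel n I \<Longrightarrow> A \<in> carrier_mat (2*n+1) (2*n+1)"
proof (induction rule: EO_rel.induct)
  case (conj X g h)
  then show ?case using mult_carrier_mat[OF mult_carrier_mat[OF EO_carrier EO_carrier]] by blast
next
  case (mult A B)
  then show ?case using mult_carrier_mat by blast
qed simp_all

lemma EO_in_EO_rel:
  assumes "X \<in> EO n I"
  shows "X \<in> EO_rel n I"
proof -
  have "1\<^sub>m (2*n+1) * X * 1\<^sub>m (2*n+1) \<in> EO_rel n I"
    by (rule EO_rel.conj[OF assms EO.one]) auto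
  then show ?thesis using EO_carrier[OF assms] by simp
qed

lemma EO_rel_in_EO: "A \<in> EO_rel n I \<Longrightarrow> A \<in> EO n UNIV"
proof (induction rule: EO_rel.induct)
  case one
  show ?case by (rule EO.one)
next
  case (conj X g h)
  have "h \<in> EO n UNIV" by (rule EO.inv[OF conj.hyps(2-5)])
  then show ?case by (rule EO.mult[OF EO.mult[OF conj.hyps(2) EO_mono[OF conj.hyps(1) subset_UNIV]]])
next
  case (mult A B)
  show ?case using mult.IH by (rule EO.mult)
next
  case (inv A B)
  show ?case using inv.IH inv.hyps(2-4) by (rule EO.inv)
qed

text \<open>\<open>assoc_mult_mat\<close> restricted to one dimension \<open>m\<close>: instantiated by \<open>[of _ m]\<close> it lets the
  simplifier discharge all carrier conditions.\<close>

lemma mult_mat_assoc_square: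
  "A \<in> carrier_mat m m \<Longrightarrow> B \<in> carrier_mat m m \<Longrightarrow> C \<in> carrier_mat m m \<Longrightarrow>
   A * B * C = A * (B * (C :: 'a::semiring_0 mat))"
  by (rule assoc_mult_mat)

lemma mult_conjugate_mult:
  assumes "g \<in> carrier_mat m m" "h \<in> carrier_mat m m" "A \<in> carrier_mat m m" "B \<in> carrier_mat m m"
    and "h * g = 1\<^sub>m m"
  shows "g * (A * B) * h = (g * A * h) * (g * B * h :: 'a::semiring_1 mat)"
  using assms mult_mat_inverse_cancel[OF assms(5,2,1) mult_carrier_mat[OF assms(4,2)]]
  by (simp add: mult_mat_assoc_square[of _ m])

lemma EO_rel_conjugate:
  assumes "Y \<in> EO_rel n I" "g \<in> EO n UNIV" "h \<in> carrier_mat (2*n+1) (2*n+1)"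
    "g * h = 1\<^sub>m (2*n+1)" "h * g = 1\<^sub>m (2*n+1)"
  shows "g * Y * h \<in> EO_rel n I"
  using assms
proof (induction arbitrary: g h rule: EO_rel.induct)
  case one
  then show ?case using EO_carrier[OF one(1)] EO_rel.one[of n I] by simp
next
  case (conj X g' h')
  have c: "g \<in> carrier_mat (2*n+1) (2*n+1)" "g' \<in> carrier_mat (2*n+1) (2*n+1)"
    "X \<in> carrier_mat (2*n+1) (2*n+1)"
    using EO_carrier[OF conj.prems(1)] EO_carrier[OF conj.hyps(2)] EO_carrier[OF conj.hyps(1)] by auto
  have "(g * g') * (h' * h) = 1\<^sub>m (2*n+1)" "(h' * h) * (g * g') = 1\<^sub>m (2*n+1)"
    using mult_mat_inverse_product[OF conj.prems(3) conj.hyps(4) c(1) conj.prems(2) c(2) conj.hyps(3)]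
      mult_mat_inverse_product[OF conj.hyps(5) conj.prems(4) conj.hyps(3) c(2) conj.prems(2) c(1)]
    by simp_all
  then have "(g * g') * X * (h' * h) \<in> EO_rel n I"
    using EO.mult[OF conj.prems(1) conj.hyps(2)] mult_carrier_mat[OF conj.hyps(3) conj.prems(2)]
    by (intro EO_rel.conj[OF conj.hyps(1)])
  moreover have "g * (g' * X * h') * h = (g * g') * X * (h' * h)"
    using c conj.hyps(3) conj.prems(2) by (simp add: mult_mat_assoc_square[of _ "2*n+1"])
  ultimately show ?case by simp
next
  case (mult A B)
  have "g * (A * B) * h = (g * A * h) * (g * B * h)"
    using EO_carrier[OF mult.prems(1)] EO_rel_carrier[OF mult.hyps(1)] EO_rel_carrier[OF mult.hyps(2)]
    by (intro mult_conjugate_mult[OF _ mult.prems(2) _ _ mult.prems(4)])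
  then show ?case using EO_rel.mult[OF mult.IH(1)[OF mult.prems] mult.IH(2)[OF mult.prems]] by simp
next
  case (inv A B)
  have c: "g \<in> carrier_mat (2*n+1) (2*n+1)" "A \<in> carrier_mat (2*n+1) (2*n+1)"
    "B \<in> carrier_mat (2*n+1) (2*n+1)"
    using EO_carrier[OF inv.prems(1)] EO_rel_carrier[OF inv.hyps(1)] inv.hyps(2) by auto
  have "(g * A * h) * (g * B * h) = g * (A * B) * h"
    by (rule mult_conjugate_mult[OF c(1) inv.prems(2) c(2,3) inv.prems(4), symmetric])
  also have "\<dots> = 1\<^sub>m (2*n+1)" using inv.hyps(3) c(1) inv.prems(3) by simp
  finally have AB: "(g * A * h) * (g * B * h) = 1\<^sub>m (2*n+1)" .
  have "(g * B * h) * (g * A * h) = g * (B * A) * h"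
    by (rule mult_conjugate_mult[OF c(1) inv.prems(2) c(3,2) inv.prems(4), symmetric])
  also have "\<dots> = 1\<^sub>m (2*n+1)" using inv.hyps(4) c(1) inv.prems(3) by simp
  finally have BA: "(g * B * h) * (g * A * h) = 1\<^sub>m (2*n+1)" .
  show ?case
    using EO_rel.inv[OF inv.IH[OF inv.prems] mult_carrier_mat[OF mult_carrier_mat[OF c(1,3)] inv.prems(2)]]
      AB BA by blast
qed

lemma EO_rel_commutator:
  assumes "A \<in> EO n I" "A' \<in> EO n I" "B \<in> EO n UNIV" "B' \<in> carrier_mat (2*n+1) (2*n+1)"
    "B * B' = 1\<^sub>m (2*n+1)" "B' * B = 1\<^sub>m (2*n+1)"
  shows "A * B * A' * B' \<in> EO_rel n I"
proof -
  have "A * B * A' * B' = A * (B * A' * B')"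
    using assms(4) EO_carrier[OF assms(1)] EO_carrier[OF assms(2)] EO_carrier[OF assms(3)]
    by (simp add: mult_mat_assoc_square[of _ "2*n+1"])
  then show ?thesis
    using EO_rel.mult[OF EO_in_EO_rel[OF assms(1)] EO_rel_conjugate[OF EO_in_EO_rel[OF assms(2)] assms(3-6)]]
    by simp
qed

lemma ideal_zero: "is_ideal I \<Longrightarrow> 0 \<in> I"
  unfolding is_ideal_def by blast

lemma ideal_add: "is_ideal I \<Longrightarrow> a \<in> I \<Longrightarrow> b \<in> I \<Longrightarrow> a + b \<in> I"
  unfolding is_ideal_def by blast

lemma ideal_mult_left: "is_ideal I \<Longrightarrow> a \<in> I \<Longrightarrow> r * a \<in> I"
  unfolding is_ideal_def by blast

lemma ideal_mult_right: "is_ideal I \<Longrightarrow> a \<in> I \<Longrightarrow> a * r \<in> I"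
  using ideal_mult_left[of I a r] by (simp add: mult.commute)

lemma ideal_uminus: "is_ideal I \<Longrightarrow> a \<in> I \<Longrightarrow> - a \<in> I"
  using ideal_mult_left[of I a "-1"] by simp

lemma ideal_diff: "is_ideal I \<Longrightarrow> a \<in> I \<Longrightarrow> b \<in> I \<Longrightarrow> a - b \<in> I"
  using ideal_add[of I a "-b"] ideal_uminus[of I b] by simp

lemma ideal_sum: "is_ideal I \<Longrightarrow> (\<And>x. x \<in> S \<Longrightarrow> f x \<in> I) \<Longrightarrow> sum f S \<in> I"
  by (induction S rule: infinite_finite_induct) (auto intro: ideal_zero ideal_add)

lemma ideal_UNIV: "is_ideal (UNIV :: 'a::comm_ring_1 set)"
  unfolding is_ideal_def by simp

lemma hyperbolic_indexE:
  fixes p n :: nat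
  assumes "1 \<le> p" "p \<le> 2*n"
  obtains i where "1 \<le> i" "i \<le> n" "p = 2*i-1" | i where "1 \<le> i" "i \<le> n" "p = 2*i"
proof (cases "odd p")
  case True
  then obtain m where m: "p = 2*m+1" by (blast elim: oddE)
  show ?thesis by (rule that(1)[of "m+1"]) (use assms m in auto)
next
  case False
  then obtain m where m: "p = 2*m" by (blast elim: evenE)
  show ?thesis by (rule that(2)[of m]) (use assms m in auto)
qed

lemma esd_unit_unit0_EO:
  assumes "two_invertible TYPE('a::comm_ring_1)" "1 \<le> p" "p \<le> 2*n" "-c \<in> J"
  shows "esd n (unit_vec (2*n+1) p) (c \<cdot>\<^sub>v unit_vec (2*n+1) 0) \<in> EO n (J :: 'a set)"
  using assms(2,3)
proof (cases rule: hyperbolic_indexE)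
  case (1 i)
  then show ?thesis using EO.gen1[OF 1(1,2) assms(4)] F1_eq_esd[OF assms(1) 1(1,2), of "-c"] by simp
next
  case (2 i)
  then show ?thesis using EO.gen2[OF 2(1,2) assms(4)] F2_eq_esd[OF assms(1) 2(1,2), of "-c"] by simp
qed

lemma index_esd_map_unit:
  assumes "two_invertible TYPE('a::comm_ring_1)" "N = 2*n+1" "p < N" "q < N" "dim_vec x = N" "k < N"
  shows "esd_map n (unit_vec N p) (c \<cdot>\<^sub>v unit_vec N q) x $ k = x $ k
     + (if k = p then c * weight q * x $ partner q - (if q = 0 then c * c else 0) * weight p * x $ partner p
        else 0)
     - (if k = q then c * weight p * x $ partner p else (0::'a))"
  using assms qform_unit[OF assms(1,2,4)]
  by (simp add: index_esd_map bform_smult_left bform_unit_left qform_smult algebra_simps)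

lemma esd_map_unit_unit0_commutator:
  assumes "two_invertible TYPE('a::comm_ring_1)"
    and "1 \<le> p" "p \<le> 2*n" "1 \<le> q" "q \<le> 2*n" "q \<noteq> p" "q \<noteq> partner p" "dim_vec x = 2*n+1"
  shows "esd_map n (unit_vec (2*n+1) p) (a \<cdot>\<^sub>v unit_vec (2*n+1) 0)
      (esd_map n (unit_vec (2*n+1) q) (b \<cdot>\<^sub>v unit_vec (2*n+1) 0)
      (esd_map n (unit_vec (2*n+1) p) ((-a) \<cdot>\<^sub>v unit_vec (2*n+1) 0)
      (esd_map n (unit_vec (2*n+1) q) ((-b) \<cdot>\<^sub>v unit_vec (2*n+1) 0) x)))
    = esd_map n (unit_vec (2*n+1) p) ((-2*a*b) \<cdot>\<^sub>v unit_vec (2*n+1) q) (x :: 'a vec)"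
proof (rule eq_vecI)
  have "partner p \<noteq> 0" "partner q \<noteq> 0" "partner p \<noteq> partner q" "partner q \<noteq> p"
    "partner p < 2*n+1" "partner q < 2*n+1" "weight p = (1::'a)" "weight q = (1::'a)"
    using assms partner_less[of p n] partner_less[of q n] by (auto simp: weight_def)
  moreover fix k assume "k < dim_vec (esd_map n (unit_vec (2*n+1) p) ((-2*a*b) \<cdot>\<^sub>v unit_vec (2*n+1) q) x)"
  ultimately show "esd_map n (unit_vec (2*n+1) p) (a \<cdot>\<^sub>v unit_vec (2*n+1) 0)
      (esd_map n (unit_vec (2*n+1) q) (b \<cdot>\<^sub>v unit_vec (2*n+1) 0)
      (esd_map n (unit_vec (2*n+1) p) ((-a) \<cdot>\<^sub>v unit_vec (2*n+1) 0)
      (esd_map n (unit_vec (2*n+1) q) ((-b) \<cdot>\<^sub>v unit_vec (2*n+1) 0) x))) $ k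
    = esd_map n (unit_vec (2*n+1) p) ((-2*a*b) \<cdot>\<^sub>v unit_vec (2*n+1) q) x $ k"
    using assms by (simp add: index_esd_map_unit weight_def algebra_simps)
qed simp

lemma mult_mat_vec_assoc4:
  assumes "A \<in> carrier_mat m m" "B \<in> carrier_mat m m" "C \<in> carrier_mat m m" "D \<in> carrier_mat m m"
    and "x \<in> carrier_vec m"
  shows "(A * B * C * D) *\<^sub>v x = A *\<^sub>v (B *\<^sub>v (C *\<^sub>v (D *\<^sub>v (x :: 'a::comm_semiring_0 vec))))"
proof -
  have "A * B \<in> carrier_mat m m" "A * B * C \<in> carrier_mat m m"
    using assms by (metis mult_carrier_mat)+
  then show ?thesis
    using assms by (simp add: assoc_mult_mat_vec[of _ m m] del: assoc_mult_mat)
qed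

lemma esd_unit_unit0_commutator:
  assumes "two_invertible TYPE('a::comm_ring_1)"
    and "1 \<le> p" "p \<le> 2*n" "1 \<le> q" "q \<le> 2*n" "q \<noteq> p" "q \<noteq> partner p"
  shows "esd n (unit_vec (2*n+1) p) (a \<cdot>\<^sub>v unit_vec (2*n+1) 0)
       * esd n (unit_vec (2*n+1) q) (b \<cdot>\<^sub>v unit_vec (2*n+1) 0)
       * esd n (unit_vec (2*n+1) p) ((-a) \<cdot>\<^sub>v unit_vec (2*n+1) 0)
       * esd n (unit_vec (2*n+1) q) ((-b) \<cdot>\<^sub>v unit_vec (2*n+1) 0)
     = esd n (unit_vec (2*n+1) p) ((-2*a*b) \<cdot>\<^sub>v unit_vec (2*n+1) q :: 'a vec)"
    (is "?A * ?B * ?A' * ?B' = ?C")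
proof (rule eq_matI_mult_mat_vec)
  fix x :: "'a vec" assume x: "dim_vec x = 2*n+1"
  have "(?A * ?B * ?A' * ?B') *\<^sub>v x = ?A *\<^sub>v (?B *\<^sub>v (?A' *\<^sub>v (?B' *\<^sub>v x)))"
    by (rule mult_mat_vec_assoc4[OF esd_carrier esd_carrier esd_carrier esd_carrier carrier_vecI[OF x]])
  then show "(?A * ?B * ?A' * ?B') *\<^sub>v x = ?C *\<^sub>v x"
    using esd_map_unit_unit0_commutator[OF assms x] x by (simp add: esd_mult_mat_vec)
qed (rule mult_carrier_mat[OF mult_carrier_mat[OF mult_carrier_mat[OF esd_carrier esd_carrier] esd_carrier]
      esd_carrier], rule esd_carrier)

lemma esd_unit_unit_other_pair_EO_rel:
  assumes "two_invertible TYPE('a::comm_ring_1)" "is_ideal I" "c \<in> I"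
    and "1 \<le> p" "p \<le> 2*n" "1 \<le> q" "q \<le> 2*n" "q \<noteq> p" "q \<noteq> partner p"
  shows "esd n (unit_vec (2*n+1) p) (c \<cdot>\<^sub>v unit_vec (2*n+1) q) \<in> EO_rel n (I :: 'a set)"
proof -
  define a where "a = - (half * c)"
  have c: "c = -2 * a * 1"
    using two_times_half[OF assms(1)] unfolding a_def by (simp add: mult.assoc[symmetric])
  have "a \<in> I" "- a \<in> I"
    unfolding a_def using ideal_mult_left[OF assms(2,3)] ideal_uminus[OF assms(2)] by auto
  moreover have "esd n (unit_vec (2*n+1) q) ((1::'a) \<cdot>\<^sub>v unit_vec (2*n+1) 0) \<in> EO n UNIV"
    using assms by (intro esd_unit_unit0_EO) auto
  moreover have "esd n (unit_vec (2*n+1) q) ((1::'a) \<cdot>\<^sub>v unit_vec (2*n+1) 0)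
      * esd n (unit_vec (2*n+1) q) ((-1::'a) \<cdot>\<^sub>v unit_vec (2*n+1) 0) = 1\<^sub>m (2*n+1)"
    "esd n (unit_vec (2*n+1) q) ((-1::'a) \<cdot>\<^sub>v unit_vec (2*n+1) 0)
      * esd n (unit_vec (2*n+1) q) ((1::'a) \<cdot>\<^sub>v unit_vec (2*n+1) 0) = 1\<^sub>m (2*n+1)"
    using assms esd_unit_unit0_inverse[OF assms(1), of q n 1] esd_unit_unit0_inverse[OF assms(1), of q n "-1"]
    by simp_all
  ultimately have "esd n (unit_vec (2*n+1) p) (a \<cdot>\<^sub>v unit_vec (2*n+1) 0)
       * esd n (unit_vec (2*n+1) q) ((1::'a) \<cdot>\<^sub>v unit_vec (2*n+1) 0)
       * esd n (unit_vec (2*n+1) p) ((-a) \<cdot>\<^sub>v unit_vec (2*n+1) 0)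
       * esd n (unit_vec (2*n+1) q) ((-1::'a) \<cdot>\<^sub>v unit_vec (2*n+1) 0) \<in> EO_rel n I"
    by (intro EO_rel_commutator esd_unit_unit0_EO[OF assms(1,4,5)] esd_carrier) simp_all
  then show ?thesis
    unfolding esd_unit_unit0_commutator[OF assms(1,4-9)] c .
qed

lemma esd_unit_unit_EO_rel:
  assumes "two_invertible TYPE('a::comm_ring_1)" "is_ideal I" "c \<in> I"
    and "1 \<le> p" "p \<le> 2*n" "q < 2*n+1" "q = partner p \<longrightarrow> c = 0"
  shows "esd n (unit_vec (2*n+1) p) (c \<cdot>\<^sub>v unit_vec (2*n+1) q) \<in> EO_rel n (I :: 'a set)"
proof -
  have isotropic: "qform n (unit_vec (2*n+1) p :: 'a vec) = 0"
    using assms qform_unit[OF assms(1)] by simp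
  consider "q = 0" | "q = p \<or> q = partner p" | "1 \<le> q" "q \<le> 2*n" "q \<noteq> p" "q \<noteq> partner p"
    using assms(6) by linarith
  then show ?thesis
  proof cases
    case 1
    show ?thesis
      unfolding 1 using assms by (intro EO_in_EO_rel esd_unit_unit0_EO) (auto intro: ideal_uminus)
  next
    case 2
    then have "c \<cdot>\<^sub>v unit_vec (2*n+1) q = (if q = p then c else 0) \<cdot>\<^sub>v unit_vec (2*n+1) p"
      using assms by auto
    then show ?thesis
      using esd_smult_self[OF assms(1) _ isotropic] EO_rel.one by simp
  next
    case 3
    then show ?thesis using assms by (intro esd_unit_unit_other_pair_EO_rel) auto
  qed
qed

lemma esd_unit_EO_rel:
  assumes "two_invertible TYPE('a::comm_ring_1)" "is_ideal I"
    and "1 \<le> p" "p \<le> 2*n" "dim_vec w = 2*n+1" "\<forall>k<2*n+1. w $ k \<in> I" "w $ partner p = 0"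
  shows "esd n (unit_vec (2*n+1) p) w \<in> EO_rel n (I :: 'a set)"
proof -
  let ?u = "unit_vec (2*n+1) p :: 'a vec"
  define W where "W m = vec (2*n+1) (\<lambda>k. if k < m then w $ k else 0)" for m
  have p: "p < 2*n+1" "partner p < 2*n+1" "partner p \<noteq> p"
    using assms partner_less[of p n] by auto
  have isotropic: "qform n ?u = 0"
    using assms qform_unit[OF assms(1)] by simp
  have orth: "bform n ?u v = 0" if "dim_vec v = 2*n+1" "v $ partner p = 0" for v
    using that p by (simp add: bform_unit_left)
  have "esd n ?u (W m) \<in> EO_rel n I" if "m \<le> 2*n+1" for m
    using that
  proof (induction m)
    case 0
    have "W 0 = 0 \<cdot>\<^sub>v ?u" unfolding W_def by (intro eq_vecI) auto
    then show ?case using esd_smult_self[OF assms(1) _ isotropic] EO_rel.one by simp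
  next
    case (Suc m)
    let ?v = "(w $ m) \<cdot>\<^sub>v unit_vec (2*n+1) m"
    have "W (Suc m) = W m + ?v"
      unfolding W_def using Suc.prems by (intro eq_vecI) (auto simp: less_Suc_eq unit_vec_def)
    moreover have "esd n ?u (W m) * esd n ?u ?v = esd n ?u (W m + ?v)"
      using assms(7) Suc.prems p
      by (intro esd_mult_esd[OF assms(1) _ _ _ isotropic orth orth]) (auto simp: W_def)
    ultimately have "esd n ?u (W m) * esd n ?u ?v = esd n ?u (W (Suc m))" by simp
    moreover have "esd n ?u ?v \<in> EO_rel n I"
      using assms Suc.prems by (intro esd_unit_unit_EO_rel) auto
    ultimately show ?case using EO_rel.mult Suc by force
  qed
  moreover have "W (2*n+1) = w" unfolding W_def using assms by (intro eq_vecI) auto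
  ultimately show ?thesis by blast
qed

lemma ideal_eq_UNIV_iff: "is_ideal I \<Longrightarrow> I = UNIV \<longleftrightarrow> (1::'a::comm_ring_1) \<in> I"
  using ideal_mult_left[of I 1] by auto

lemma maximal_ideal_is_ideal: "is_maximal_ideal M \<Longrightarrow> is_ideal M"
  unfolding is_maximal_ideal_def by blast

lemma one_notin_maximal_ideal: "is_maximal_ideal M \<Longrightarrow> (1::'a::comm_ring_1) \<notin> M"
  using ideal_eq_UNIV_iff maximal_ideal_is_ideal unfolding is_maximal_ideal_def by blast

lemma ideal_Union_chain:
  assumes "C \<noteq> {}" "\<And>K. K \<in> C \<Longrightarrow> is_ideal K" "\<And>K L. K \<in> C \<Longrightarrow> L \<in> C \<Longrightarrow> K \<subseteq> L \<or> L \<subseteq> K"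
  shows "is_ideal (\<Union>C :: 'a::comm_ring_1 set)"
  unfolding is_ideal_def
proof (intro conjI ballI allI)
  show "0 \<in> \<Union>C" using assms(1,2) ideal_zero by blast
next
  fix a b assume "a \<in> \<Union>C" "b \<in> \<Union>C"
  then obtain K L where KL: "K \<in> C" "L \<in> C" "a \<in> K" "b \<in> L" by blast
  show "a + b \<in> \<Union>C"
  proof (cases "K \<subseteq> L")
    case True
    then show ?thesis using KL assms(2)[OF KL(2)] ideal_add[of L a b] by blast
  next
    case False
    then show ?thesis using KL assms(3)[OF KL(1,2)] assms(2)[OF KL(1)] ideal_add[of K a b] by blast
  qed
next
  fix r a assume "a \<in> \<Union>C"
  then obtain K where "K \<in> C" "a \<in> K" by blast
  then show "r * a \<in> \<Union>C" using assms(2) ideal_mult_left[of K a r] by blast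
qed

lemma maximal_ideal_exists:
  assumes "is_ideal J" "(1::'a::comm_ring_1) \<notin> J"
  obtains M where "is_maximal_ideal M" "J \<subseteq> M"
proof -
  let ?A = "{K. is_ideal K \<and> J \<subseteq> K \<and> (1::'a) \<notin> K}"
  have chains: "\<Union>C \<in> ?A" if nonempty: "C \<noteq> {}" and "subset.chain ?A C" for C
  proof -
    have C: "\<And>K. K \<in> C \<Longrightarrow> is_ideal K \<and> J \<subseteq> K \<and> 1 \<notin> K"
      and chain: "\<And>K L. K \<in> C \<Longrightarrow> L \<in> C \<Longrightarrow> K \<subseteq> L \<or> L \<subseteq> K"
      using that(2) unfolding subset.chain_def by auto
    have "is_ideal (\<Union>C)" using ideal_Union_chain[OF nonempty _ chain] C by blast
    moreover have "J \<subseteq> \<Union>C" using nonempty C by blast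
    moreover have "1 \<notin> \<Union>C" using C by blast
    ultimately show ?thesis by blast
  qed
  have "?A \<noteq> {}" using assms by blast
  then obtain M where M: "M \<in> ?A" "\<forall>K\<in>?A. M \<subseteq> K \<longrightarrow> K = M"
    using subset_Zorn_nonempty[OF _ chains] by blast
  have "is_maximal_ideal M"
    unfolding is_maximal_ideal_def
  proof (intro conjI allI impI)
    show "is_ideal M" "M \<noteq> UNIV" using M(1) by auto
    fix K assume K: "is_ideal K \<and> M \<subseteq> K"
    show "K = M \<or> K = UNIV"
    proof (cases "1 \<in> K")
      case True
      then show ?thesis using K ideal_eq_UNIV_iff by blast
    next
      case False
      then show ?thesis using K M by blast
    qed
  qed
  then show ?thesis using M(1) that by blast
qed

lemma unit_if_notin_maximal_ideals:
  assumes "\<And>M. is_maximal_ideal M \<Longrightarrow> (x::'a::comm_ring_1) \<notin> M"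
  obtains y where "x * y = 1"
proof -
  let ?P = "{x * r | r. True}"
  have P: "is_ideal ?P" unfolding is_ideal_def
  proof (intro conjI ballI allI)
    show "0 \<in> ?P" by (auto intro: exI[of _ 0])
  next
    fix a b assume "a \<in> ?P" "b \<in> ?P"
    then obtain r s where "a = x * r" "b = x * s" by blast
    then show "a + b \<in> ?P" by (auto intro!: exI[of _ "r + s"] simp: algebra_simps)
  next
    fix t a assume "a \<in> ?P"
    then obtain r where "a = x * r" by blast
    then show "t * a \<in> ?P" by (auto intro!: exI[of _ "t * r"] simp: algebra_simps)
  qed
  have "1 \<in> ?P"
  proof (rule ccontr)
    assume "1 \<notin> ?P"
    then obtain M where "is_maximal_ideal M" "?P \<subseteq> M"
      by (rule maximal_ideal_exists[OF P])
    moreover have "x \<in> ?P" by (auto intro: exI[of _ 1])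
    ultimately show False using assms by blast
  qed
  then show ?thesis using that by auto
qed

lemma maximal_ideal_complement:
  assumes "is_maximal_ideal M" "(a::'a::comm_ring_1) \<notin> M"
  obtains m r where "m \<in> M" "m + r * a = 1"
proof -
  let ?J = "{m + r * a | m r. m \<in> M}"
  have M: "is_ideal M" using assms(1) by (rule maximal_ideal_is_ideal)
  have "is_ideal ?J"
    unfolding is_ideal_def
  proof (intro conjI ballI allI)
    show "0 \<in> ?J" using ideal_zero[OF M] by (auto intro!: exI[of _ 0])
  next
    fix x y assume "x \<in> ?J" "y \<in> ?J"
    then obtain m1 r1 m2 r2 where "x = m1 + r1 * a" "y = m2 + r2 * a" "m1 \<in> M" "m2 \<in> M" by blast
    then show "x + y \<in> ?J"
      using ideal_add[OF M] by (intro CollectI exI[of _ "m1 + m2"] exI[of _ "r1 + r2"]) (auto simp: algebra_simps)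
  next
    fix s x assume "x \<in> ?J"
    then obtain m r where "x = m + r * a" "m \<in> M" by blast
    then show "s * x \<in> ?J"
      using ideal_mult_left[OF M] by (intro CollectI exI[of _ "s * m"] exI[of _ "s * r"]) (auto simp: algebra_simps)
  qed
  moreover have "M \<subseteq> ?J" by (force intro: exI[of _ 0])
  moreover have "a \<in> ?J" using ideal_zero[OF M] by (force intro: exI[of _ 0] exI[of _ 1])
  ultimately have "?J = UNIV" using assms unfolding is_maximal_ideal_def by blast
  then obtain m r where "m \<in> M" "1 = m + r * a" by blast
  then show ?thesis using that by simp
qed

lemma maximal_ideal_square:
  assumes "is_maximal_ideal M" "(a::'a::comm_ring_1) * a \<in> M"
  shows "a \<in> M"
proof (rule ccontr)
  assume "a \<notin> M"
  then obtain m r where m: "m \<in> M" "m + r * a = 1" using maximal_ideal_complement[OF assms(1)] by blast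
  then have "a = a * m + r * (a * a)" by (metis mult.left_commute distrib_left mult_1_right)
  moreover have "a * m + r * (a * a) \<in> M"
    using m assms maximal_ideal_is_ideal ideal_add ideal_mult_left by blast
  ultimately show False using \<open>a \<notin> M\<close> by simp
qed

lemma maximal_ideals_comaximal:
  assumes "is_maximal_ideal M" "is_maximal_ideal M'" "M \<noteq> M'"
  obtains a b where "a \<in> M" "b \<in> M'" "a + b = (1::'a::comm_ring_1)"
proof -
  have "\<not> M' \<subseteq> M"
    using assms maximal_ideal_is_ideal one_notin_maximal_ideal unfolding is_maximal_ideal_def by blast
  then obtain b where b: "b \<in> M'" "b \<notin> M" by blast
  obtain m r where "m \<in> M" "m + r * b = 1" using maximal_ideal_complement[OF assms(1) b(2)] by blast
  moreover have "r * b \<in> M'" using ideal_mult_left[OF maximal_ideal_is_ideal[OF assms(2)] b(1)] .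
  ultimately show ?thesis using that by blast
qed

lemma maximal_ideals_separating_element:
  assumes "finite S" "\<forall>M\<in>S. is_maximal_ideal M" "is_maximal_ideal M0" "M0 \<notin> S"
  shows "\<exists>e::'a::comm_ring_1. e - 1 \<in> M0 \<and> (\<forall>M\<in>S. e \<in> M)"
  using assms
proof (induction S rule: finite_induct)
  case empty
  show ?case using ideal_zero[OF maximal_ideal_is_ideal[OF empty.prems(2)]] by (intro exI[of _ 1]) simp
next
  case (insert M1 S)
  obtain e where e: "e - 1 \<in> M0" "\<forall>M\<in>S. e \<in> M" using insert.IH insert.prems by auto
  have M1: "is_maximal_ideal M1" "M0 \<noteq> M1" using insert.prems by auto
  obtain a b where ab: "a \<in> M0" "b \<in> M1" "a + b = 1"
    using maximal_ideals_comaximal[OF insert.prems(2) M1] by blast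
  have M0: "is_ideal M0" using insert.prems(2) by (rule maximal_ideal_is_ideal)
  have "e * b - 1 = (e - 1) * b - a" using ab(3) by (simp add: algebra_simps)
  then have "e * b - 1 \<in> M0" using ideal_diff[OF M0 ideal_mult_right[OF M0 e(1)] ab(1)] by simp
  moreover have "e * b \<in> M1" using ideal_mult_left[OF maximal_ideal_is_ideal[OF M1(1)] ab(2)] .
  moreover have "e * b \<in> M" if "M \<in> S" for M
    using ideal_mult_right[OF _ bspec[OF e(2) that]] insert.prems(1) that maximal_ideal_is_ideal by blast
  ultimately show ?case by blast
qed

lemma chinese_remainder_maximal_ideals:
  assumes "finite S" "\<forall>M\<in>S. is_maximal_ideal M"
  obtains t :: "'a::comm_ring_1" where "\<forall>M\<in>S. t - f M \<in> M"
proof -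
  have "\<forall>M\<in>S. \<exists>e::'a. e - 1 \<in> M \<and> (\<forall>M'\<in>S - {M}. e \<in> M')"
    using assms by (intro ballI maximal_ideals_separating_element) auto
  then obtain e where e: "\<And>M. M \<in> S \<Longrightarrow> e M - 1 \<in> M \<and> (\<forall>M'\<in>S - {M}. e M \<in> M')"
    by metis
  have "(\<Sum>M\<in>S. f M * e M) - f M0 \<in> M0" if M0: "M0 \<in> S" for M0
  proof -
    have I: "is_ideal M0" using assms M0 maximal_ideal_is_ideal by blast
    have "(\<Sum>M\<in>S. f M * e M) - f M0 = f M0 * (e M0 - 1) + (\<Sum>M\<in>S - {M0}. f M * e M)"
      using assms(1) M0 by (simp add: sum.remove algebra_simps)
    moreover have "f M0 * (e M0 - 1) \<in> M0" using ideal_mult_left[OF I] e[OF M0] by blast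
    moreover have "(\<Sum>M\<in>S - {M0}. f M * e M) \<in> M0"
      using e M0 by (intro ideal_sum[OF I] ideal_mult_left[OF I]) auto
    ultimately show ?thesis using ideal_add[OF I] by simp
  qed
  then show ?thesis using that by blast
qed

lemma notin_ideal_diff:
  assumes "is_ideal M" "a - b \<in> M" "b \<notin> M"
  shows "a \<notin> M"
proof
  assume "a \<in> M"
  then have "a - (a - b) \<in> M" using ideal_diff[OF assms(1) _ assms(2)] by blast
  then show False using assms(3) by simp
qed

lemma bform_in_ideal:
  assumes "is_ideal M" "dim_vec d = 2*n+1" "dim_vec y = 2*n+1" "\<forall>k<2*n+1. d $ k \<in> M"
  shows "bform n d y \<in> M" "bform n y d \<in> M"
proof -
  show "bform n d y \<in> M"
    unfolding bform_expand[OF assms(3)] using assms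
    by (intro ideal_sum[OF assms(1)] ideal_mult_right[OF assms(1)] ideal_mult_left[OF assms(1)]) auto
  then show "bform n y d \<in> M" using bform_commute[OF assms(2,3)] by simp
qed

definition cong_vec :: "'a::comm_ring_1 set \<Rightarrow> 'a vec \<Rightarrow> 'a vec \<Rightarrow> bool" where
  "cong_vec M x y \<longleftrightarrow> dim_vec x = dim_vec y \<and> (\<forall>k<dim_vec y. x $ k - y $ k \<in> M)"

lemma cong_vec_notin:
  assumes "is_ideal M" "cong_vec M y x" "k < dim_vec x" "x $ k \<notin> M"
  shows "y $ k \<notin> M"
  using assms notin_ideal_diff unfolding cong_vec_def by blast

lemma esd_map_cong:
  assumes "two_invertible TYPE('a::comm_ring_1)" "is_ideal M"
    and dims: "dim_vec u = 2*n+1" "dim_vec w = 2*n+1" "dim_vec w' = 2*n+1" "dim_vec x = 2*n+1"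
    and "cong_vec M w w'"
  shows "cong_vec M (esd_map n u w x) (esd_map n u w' x :: 'a vec)"
proof -
  define d where "d = w - w'"
  have d: "dim_vec d = 2*n+1" "\<forall>k<2*n+1. d $ k \<in> M"
    unfolding d_def using dims assms(7) by (simp_all add: cong_vec_def)
  have "w = w' + d" unfolding d_def using dims by (intro eq_vecI) simp_all
  note d = d this
  have "qform n w - qform n w' = half * bform n d d + bform n w' d"
    using qform_add[OF assms(1) dims(3) d(1)] d(3) by (simp add: qform_def)
  also have "\<dots> \<in> M"
    using bform_in_ideal[OF assms(2) d(1) d(1) d(2)] bform_in_ideal[OF assms(2) d(1) dims(3) d(2)]
    by (intro ideal_add[OF assms(2)] ideal_mult_left[OF assms(2)]) auto
  finally have q: "qform n w - qform n w' \<in> M" .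
  have b: "bform n w x - bform n w' x \<in> M"
    using bform_in_ideal(1)[OF assms(2) d(1) dims(4) d(2)] d(3) dims by (simp add: bform_add_left)
  have "esd_map n u w x $ k - esd_map n u w' x $ k \<in> M" if k: "k < 2*n+1" for k
  proof -
    have "esd_map n u w x $ k - esd_map n u w' x $ k
        = (bform n w x - bform n w' x) * u$k - bform n u x * d$k
          - (qform n w - qform n w') * bform n u x * u$k"
      using dims k by (simp add: index_esd_map d_def algebra_simps)
    also have "\<dots> \<in> M"
    proof (intro ideal_diff[OF assms(2)])
      show "(bform n w x - bform n w' x) * u$k \<in> M" by (rule ideal_mult_right[OF assms(2) b])
      show "bform n u x * d$k \<in> M" using d(2) k by (intro ideal_mult_left[OF assms(2)]) auto
      show "(qform n w - qform n w') * bform n u x * u$k \<in> M"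
        by (rule ideal_mult_right[OF assms(2) ideal_mult_right[OF assms(2) q]])
    qed
    finally show ?thesis .
  qed
  then show ?thesis using dims by (simp add: cong_vec_def)
qed

definition EO_reach :: "nat \<Rightarrow> 'a::comm_ring_1 vec \<Rightarrow> 'a vec \<Rightarrow> bool" where
  "EO_reach n x y \<longleftrightarrow> (\<exists>g\<in>EO n UNIV. g *\<^sub>v x = y)"

lemma EO_reach_trans:
  assumes "EO_reach n x y" "EO_reach n y z" "dim_vec x = 2*n+1"
  shows "EO_reach n x z"
proof -
  obtain g g' where g: "g \<in> EO n UNIV" "g *\<^sub>v x = y" and g': "g' \<in> EO n UNIV" "g' *\<^sub>v y = z"
    using assms(1,2) unfolding EO_reach_def by blast
  have "(g' * g) *\<^sub>v x = z"
    using assoc_mult_mat_vec[OF EO_carrier[OF g'(1)] EO_carrier[OF g(1)] carrier_vecI[OF assms(3)]] g g'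
    by simp
  then show ?thesis unfolding EO_reach_def using EO.mult[OF g'(1) g(1)] by blast
qed

lemma EO_reach_esd_map:
  assumes "two_invertible TYPE('a::comm_ring_1)" "1 \<le> p" "p \<le> 2*n"
    and "dim_vec w = 2*n+1" "w $ partner p = 0" "dim_vec x = 2*n+1"
  shows "EO_reach n x (esd_map n (unit_vec (2*n+1) p) w (x :: 'a vec))"
proof -
  have "esd n (unit_vec (2*n+1) p) w \<in> EO n UNIV"
    using esd_unit_EO_rel[OF assms(1) ideal_UNIV assms(2-4) _ assms(5)] by (intro EO_rel_in_EO) simp
  then show ?thesis
    unfolding EO_reach_def using esd_mult_mat_vec[of "unit_vec (2*n+1) p" n w x] assms(4,6) by auto
qed

lemma EO_reach_dim: "EO_reach n x y \<Longrightarrow> dim_vec y = 2*n+1"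
  unfolding EO_reach_def using EO_carrier by fastforce

lemma EO_reach_bform_self:
  assumes "two_invertible TYPE('a::comm_ring_1)" "EO_reach n x y" "dim_vec x = 2*n+1"
  shows "bform n y y = bform n x (x :: 'a vec)"
  using assms EO_isometry unfolding EO_reach_def by blast

lemma esd_map_local_global:
  assumes "finite {M::'a set. is_maximal_ideal M}" "two_invertible TYPE('a::comm_ring_1)"
    and "p < 2*n+1" "dim_vec x = 2*n+1"
    and local: "\<And>M. is_maximal_ideal M \<Longrightarrow> \<exists>\<tau>. dim_vec \<tau> = 2*n+1 \<and> \<tau> $ partner p = 0 \<and>
       (\<forall>y. cong_vec M y (esd_map n (unit_vec (2*n+1) p) \<tau> x) \<longrightarrow> Q M y)"
  obtains w where "dim_vec w = 2*n+1" "w $ partner p = 0"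
    "\<And>M. is_maximal_ideal M \<Longrightarrow> Q M (esd_map n (unit_vec (2*n+1) p) w (x :: 'a vec))"
proof -
  have "\<forall>M. \<exists>\<tau>. is_maximal_ideal M \<longrightarrow> dim_vec \<tau> = 2*n+1 \<and> \<tau> $ partner p = 0 \<and>
       (\<forall>y. cong_vec M y (esd_map n (unit_vec (2*n+1) p) \<tau> x) \<longrightarrow> Q M y)"
    using local by blast
  from choice[OF this] obtain \<tau> where \<tau>: "\<And>M. is_maximal_ideal M \<Longrightarrow>
      dim_vec (\<tau> M) = 2*n+1 \<and> \<tau> M $ partner p = 0 \<and>
      (\<forall>y. cong_vec M y (esd_map n (unit_vec (2*n+1) p) (\<tau> M) x) \<longrightarrow> Q M y)"
    by blast
  have "\<forall>k. \<exists>t. \<forall>M\<in>{M. is_maximal_ideal M}. t - \<tau> M $ k \<in> M"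
  proof
    fix k
    obtain t where "\<forall>M\<in>{M. is_maximal_ideal M}. t - \<tau> M $ k \<in> M"
      by (rule chinese_remainder_maximal_ideals[OF assms(1)]) simp_all
    then show "\<exists>t. \<forall>M\<in>{M. is_maximal_ideal M}. t - \<tau> M $ k \<in> M" ..
  qed
  from choice[OF this] obtain T where T: "\<And>k M. is_maximal_ideal M \<Longrightarrow> T k - \<tau> M $ k \<in> M"
    by blast
  define w where "w = vec (2*n+1) (\<lambda>k. if k = partner p then 0 else T k)"
  have w: "dim_vec w = 2*n+1" "w $ partner p = 0"
    unfolding w_def using partner_less[OF assms(3)] by simp_all
  have "Q M (esd_map n (unit_vec (2*n+1) p) w x)" if M: "is_maximal_ideal M" for M
  proof -
    have I: "is_ideal M" using M by (rule maximal_ideal_is_ideal)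
    have \<tau>M: "dim_vec (\<tau> M) = 2*n+1" "\<tau> M $ partner p = 0"
      using \<tau>[OF M] by simp_all
    have "cong_vec M w (\<tau> M)"
      using T[OF M] \<tau>M ideal_zero[OF I] by (simp add: w_def cong_vec_def)
    then have "cong_vec M (esd_map n (unit_vec (2*n+1) p) w x) (esd_map n (unit_vec (2*n+1) p) (\<tau> M) x)"
      using assms(2,3,4) I w(1) \<tau>M(1) by (intro esd_map_cong) simp_all
    then show ?thesis using \<tau>[OF M] by blast
  qed
  then show ?thesis using w that by blast
qed

lemma bform_self_expand:
  assumes "dim_vec x = 2*n+1"
  shows "bform n x x = 2 * x$0 * x$0 + (\<Sum>k\<in>{1..2*n}. x$k * x$partner k)"
proof -
  have "{..<2*n+1} = insert 0 {1..2*n}" by auto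
  then have "bform n x x = weight 0 * x$0 * x$partner 0 + (\<Sum>k\<in>{1..2*n}. weight k * x$k * x$partner k)"
    unfolding bform_expand[OF assms] by simp
  also have "\<dots> = 2 * x$0 * x$0 + (\<Sum>k\<in>{1..2*n}. x$k * x$partner k)"
    by (auto simp: weight_def intro!: sum.cong)
  finally show ?thesis .
qed

lemma isotropic_unimodular_hyperbolic_coordinate:
  assumes "two_invertible TYPE('a::comm_ring_1)" "is_maximal_ideal M"
    and "unimodular (2*n+1) u" "qform n u = (0::'a)"
  shows "\<exists>k\<in>{1..2*n}. u $ k \<notin> M"
proof (rule ccontr)
  assume "\<not> (\<exists>k\<in>{1..2*n}. u $ k \<notin> M)"
  then have hyperbolic: "\<forall>k\<in>{1..2*n}. u $ k \<in> M" by blast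
  have I: "is_ideal M" using assms(2) by (rule maximal_ideal_is_ideal)
  obtain w where w: "dim_vec w = 2*n+1" "w \<bullet> u = 1" and u: "dim_vec u = 2*n+1"
    using assms(3) unfolding unimodular_def by blast
  have "(\<Sum>k\<in>{1..2*n}. u$k * u$partner k) \<in> M"
    using hyperbolic by (intro ideal_sum[OF I] ideal_mult_right[OF I]) auto
  then have "- (\<Sum>k\<in>{1..2*n}. u$k * u$partner k) \<in> M" by (rule ideal_uminus[OF I])
  moreover have "2 * u$0 * u$0 = - (\<Sum>k\<in>{1..2*n}. u$k * u$partner k)"
    using bform_self_expand[OF u] bform_self[OF assms(1), of n u] assms(4) by (simp add: eq_neg_iff_add_eq_0)
  ultimately have "2 * u$0 * u$0 \<in> M" by simp
  then have "half * (2 * u$0 * u$0) \<in> M" by (rule ideal_mult_left[OF I])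
  moreover have "half * (2 * u$0 * u$0) = (2 * half) * (u$0 * u$0)" by (simp add: algebra_simps)
  ultimately have "u$0 * u$0 \<in> M" using two_times_half[OF assms(1)] by simp
  then have "u$0 \<in> M" by (rule maximal_ideal_square[OF assms(2)])
  have "\<forall>k<2*n+1. u $ k \<in> M"
  proof (intro allI impI)
    fix k assume "k < 2*n+1"
    then show "u $ k \<in> M" using hyperbolic \<open>u$0 \<in> M\<close> by (cases "k = 0") auto
  qed
  then have "w \<bullet> u \<in> M"
    unfolding scalar_prod_def using u by (intro ideal_sum[OF I] ideal_mult_left[OF I]) auto
  then show False using w(2) one_notin_maximal_ideal[OF assms(2)] by simp
qed

lemma partner_1_to_4 [simp]: "partner (Suc 0) = 2" "partner 2 = Suc 0" "partner 3 = 4" "partner 4 = 3"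
  by (simp_all add: partner_def)

text \<open>Coordinate 3 has to be avoided: the transvections \<open>esd_map n e\<^sub>4 w\<close> that make coordinate 4
  a unit in the next step preserve \<open>bform n e\<^sub>4 x = x $ 3\<close>, so they cannot use it.\<close>

lemma EO_reach_hyperbolic_coordinate_off_3:
  fixes u :: "'a::comm_ring_1 vec"
  assumes fin: "finite {M::'a set. is_maximal_ideal M}" and two: "two_invertible TYPE('a)"
    and n: "2 \<le> n" and u: "dim_vec u = 2*n+1"
    and hyp: "\<And>M. is_maximal_ideal M \<Longrightarrow> \<exists>k\<in>{1..2*n}. u $ k \<notin> M"
  obtains x where "EO_reach n u x" "\<And>M. is_maximal_ideal M \<Longrightarrow> \<exists>k\<in>{1..2*n}-{3}. x $ k \<notin> M"
proof -
  let ?e = "unit_vec (2*n+1) :: nat \<Rightarrow> 'a vec"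
  have local: "\<exists>\<tau>. dim_vec \<tau> = 2*n+1 \<and> \<tau> $ partner 1 = 0 \<and>
     (\<forall>y. cong_vec M y (esd_map n (?e 1) \<tau> u) \<longrightarrow> (\<exists>k\<in>{1..2*n}-{3}. y $ k \<notin> M))"
    if M: "is_maximal_ideal M" for M
  proof (cases "\<exists>k\<in>{1..2*n}-{3}. u $ k \<notin> M")
    case True
    then obtain k where k: "k \<in> {1..2*n}-{3}" "u $ k \<notin> M" by blast
    have "esd_map n (?e 1) (0 \<cdot>\<^sub>v ?e 1) u = u"
      using two n u by (intro esd_map_smult_self) (simp_all add: qform_unit)
    then show ?thesis
      using cong_vec_notin[OF maximal_ideal_is_ideal[OF M] _ _ k(2)] k(1) u n
      by (intro exI[of _ "0 \<cdot>\<^sub>v ?e 1"]) force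
  next
    case False
    then have off3: "\<forall>k\<in>{1..2*n}-{3}. u $ k \<in> M" by blast
    then have u3: "u $ 3 \<notin> M" using hyp[OF M] by blast
    have image: "esd_map n (?e 1) (1 \<cdot>\<^sub>v ?e 4) u $ 1 - u $ 3 = u $ 1"
      using index_esd_map_unit[OF two refl, where p=1 and q=4 and x=u and k=1 and c=1] n u
      by (simp add: weight_def)
    have "y $ 1 \<notin> M" if "cong_vec M y (esd_map n (?e 1) (1 \<cdot>\<^sub>v ?e 4) u)" for y
    proof -
      have "esd_map n (?e 1) (1 \<cdot>\<^sub>v ?e 4) u $ 1 \<notin> M"
        using notin_ideal_diff[OF maximal_ideal_is_ideal[OF M] _ u3] image off3 n by auto
      then show ?thesis using cong_vec_notin[OF maximal_ideal_is_ideal[OF M] that] n by simp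
    qed
    then show ?thesis using n by (intro exI[of _ "1 \<cdot>\<^sub>v ?e 4"]) force
  qed
  obtain w where w: "dim_vec w = 2*n+1" "w $ partner 1 = 0"
    "\<And>M. is_maximal_ideal M \<Longrightarrow> \<exists>k\<in>{1..2*n}-{3}. esd_map n (?e 1) w u $ k \<notin> M"
    using esd_map_local_global[OF fin two _ u local] n by auto
  show ?thesis
  proof (rule that)
    show "EO_reach n u (esd_map n (?e 1) w u)" using EO_reach_esd_map[OF two _ _ w(1,2) u] n by simp
  qed (rule w(3))
qed

lemma EO_reach_unit_coordinate_4:
  fixes x :: "'a::comm_ring_1 vec"
  assumes fin: "finite {M::'a set. is_maximal_ideal M}" and two: "two_invertible TYPE('a)"
    and n: "2 \<le> n" and x: "dim_vec x = 2*n+1"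
    and hyp: "\<And>M. is_maximal_ideal M \<Longrightarrow> \<exists>k\<in>{1..2*n}-{3}. x $ k \<notin> M"
  obtains y z where "EO_reach n x y" "y $ 4 * z = 1"
proof -
  let ?e = "unit_vec (2*n+1) :: nat \<Rightarrow> 'a vec"
  have local: "\<exists>\<tau>. dim_vec \<tau> = 2*n+1 \<and> \<tau> $ partner 4 = 0 \<and>
     (\<forall>y. cong_vec M y (esd_map n (?e 4) \<tau> x) \<longrightarrow> y $ 4 \<notin> M)"
    if M: "is_maximal_ideal M" for M
  proof (cases "x $ 4 \<in> M")
    case False
    have "esd_map n (?e 4) (0 \<cdot>\<^sub>v ?e 4) x = x"
      using two n x by (intro esd_map_smult_self) (simp_all add: qform_unit)
    then show ?thesis
      using cong_vec_notin[OF maximal_ideal_is_ideal[OF M] _ _ False] x n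
      by (intro exI[of _ "0 \<cdot>\<^sub>v ?e 4"]) force
  next
    case True
    then obtain k where k: "k \<in> {1..2*n}" "k \<noteq> 3" "k \<noteq> 4" "x $ k \<notin> M"
      using hyp[OF M] by fastforce
    have pk: "partner k \<noteq> 0" "partner k \<noteq> 4" "partner k \<noteq> 3" "partner k < 2*n+1" "weight (partner k) = (1::'a)"
      using k partner_less[of k n] partner_eq_iff[of k 4] partner_eq_iff[of k 3] by (auto simp: weight_def)
    have image: "esd_map n (?e 4) (1 \<cdot>\<^sub>v ?e (partner k)) x $ 4 - x $ k = x $ 4"
      using index_esd_map_unit[OF two refl, where p=4 and q="partner k" and x=x and k=4 and c=1] n x pk
      by simp
    have "y $ 4 \<notin> M" if "cong_vec M y (esd_map n (?e 4) (1 \<cdot>\<^sub>v ?e (partner k)) x)" for y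
    proof -
      have "esd_map n (?e 4) (1 \<cdot>\<^sub>v ?e (partner k)) x $ 4 \<notin> M"
        using notin_ideal_diff[OF maximal_ideal_is_ideal[OF M] _ k(4)] image True by auto
      then show ?thesis using cong_vec_notin[OF maximal_ideal_is_ideal[OF M] that] n by simp
    qed
    then show ?thesis using pk n by (intro exI[of _ "1 \<cdot>\<^sub>v ?e (partner k)"]) simp
  qed
  obtain w where w: "dim_vec w = 2*n+1" "w $ partner 4 = 0"
    "\<And>M. is_maximal_ideal M \<Longrightarrow> esd_map n (?e 4) w x $ 4 \<notin> M"
    using esd_map_local_global[OF fin two _ x local] n by auto
  obtain z where "esd_map n (?e 4) w x $ 4 * z = 1"
    using w(3) by (rule unit_if_notin_maximal_ideals)
  moreover have "EO_reach n x (esd_map n (?e 4) w x)" using EO_reach_esd_map[OF two _ _ w(1,2) x] n by simp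
  ultimately show ?thesis by (rule that[rotated])
qed

lemma EO_reach_coordinate_1_eq_1:
  fixes x :: "'a::comm_ring_1 vec"
  assumes two: "two_invertible TYPE('a)" and n: "2 \<le> n" and x: "dim_vec x = 2*n+1"
    and unit: "x $ 4 * z = 1"
  obtains y where "EO_reach n x y" "y $ 1 = 1"
proof -
  let ?e = "unit_vec (2*n+1) :: nat \<Rightarrow> 'a vec"
  define s where "s = (1 - x $ 1) * z"
  have "esd_map n (?e 1) (s \<cdot>\<^sub>v ?e 3) x $ 1 = x $ 1 + s * x $ 4"
    using index_esd_map_unit[OF two refl, where p=1 and q=3 and x=x and k=1 and c=s] n x
    by (simp add: weight_def)
  also have "s * x $ 4 = 1 - x $ 1" unfolding s_def using unit by (metis mult.assoc mult.commute mult_1_right)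
  also have "x $ 1 + (1 - x $ 1) = 1" by simp
  finally show ?thesis
    using that EO_reach_esd_map[OF two _ _ _ _ x, of 1 "s \<cdot>\<^sub>v ?e 3"] n by simp
qed

lemma EO_reach_unit_vec_1:
  fixes x :: "'a::comm_ring_1 vec"
  assumes two: "two_invertible TYPE('a)" and n: "2 \<le> n" and x: "dim_vec x = 2*n+1"
    and isotropic: "bform n x x = 0" and x1: "x $ 1 = 1"
  shows "EO_reach n x (unit_vec (2*n+1) 1)"
proof -
  let ?e = "unit_vec (2*n+1) :: nat \<Rightarrow> 'a vec"
  define w where "w = vec (2*n+1) (\<lambda>k. if k = 1 \<or> k = 2 then 0 else x $ k)"
  define y where "y = esd_map n (?e 2) w x"
  have w: "dim_vec w = 2*n+1" "w $ partner 2 = 0" unfolding w_def using n by simp_all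
  have y: "dim_vec y = 2*n+1" "EO_reach n x y"
    unfolding y_def using n x w by (simp, intro EO_reach_esd_map[OF two]) simp_all
  have "bform n (?e 2) x = 1"
    using bform_unit_left[OF refl x, of 2] n x1 by (simp add: weight_def)
  then have y_index: "y $ k = (if k = 1 then 1 else 0)" if "k < 2*n+1" "k \<noteq> 2" for k
    unfolding y_def using that n x w index_esd_map[OF x _ w(1) that(1), of "?e 2"] x1
    by (simp add: w_def)
  have "(\<Sum>k\<in>{1..2*n}. y $ k * y $ partner k)
      = (\<Sum>k\<in>{1..2*n}. (if k = 1 then y $ 2 else 0) + (if k = 2 then y $ 2 else 0))"
  proof (intro sum.cong refl)
    fix k assume k: "k \<in> {1..2*n}"
    show "y $ k * y $ partner k = (if k = 1 then y $ 2 else 0) + (if k = 2 then y $ 2 else 0)"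
      using k y_index[of k] y_index[of 1] n by (cases "k = 1 \<or> k = 2") auto
  qed
  also have "\<dots> = y $ 2 + y $ 2" using n by (simp add: sum.distrib)
  finally have "bform n y y = 2 * y $ 2"
    using bform_self_expand[OF y(1)] y_index[of 0] by simp
  moreover have "bform n y y = 0"
    using EO_reach_bform_self[OF two y(2) x] isotropic by simp
  ultimately have "half * (2 * y $ 2) = 0" by simp
  then have "y $ 2 = 0"
    using two_times_half[OF two] by (simp add: mult.assoc[symmetric] mult.commute[of half])
  have "y = ?e 1"
  proof (rule eq_vecI)
    fix i assume "i < dim_vec (?e 1)"
    then show "y $ i = ?e 1 $ i" using y_index[of i] \<open>y $ 2 = 0\<close> n by (cases "i = 2") auto
  qed (use y in simp)
  then show ?thesis using y(2) by simp
qed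

lemma EO_reach_isotropic_unimodular:
  fixes u :: "'a::comm_ring_1 vec"
  assumes fin: "finite {M::'a set. is_maximal_ideal M}" and two: "two_invertible TYPE('a)"
    and n: "2 \<le> n" and "unimodular (2*n+1) u" "qform n u = 0"
  shows "EO_reach n u (unit_vec (2*n+1) 1)"
proof -
  have u: "dim_vec u = 2*n+1" using assms(4) unfolding unimodular_def by blast
  obtain x where x: "EO_reach n u x" "\<And>M. is_maximal_ideal M \<Longrightarrow> \<exists>k\<in>{1..2*n}-{3}. x $ k \<notin> M"
    using EO_reach_hyperbolic_coordinate_off_3[OF fin two n u
        isotropic_unimodular_hyperbolic_coordinate[OF two _ assms(4,5)]] by blast
  obtain y z where y: "EO_reach n x y" "y $ 4 * z = 1"
    by (rule EO_reach_unit_coordinate_4[OF fin two n EO_reach_dim[OF x(1)] x(2)])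
  obtain y' where y': "EO_reach n y y'" "y' $ 1 = 1"
    by (rule EO_reach_coordinate_1_eq_1[OF two n EO_reach_dim[OF y(1)] y(2)])
  have u_y': "EO_reach n u y'" using EO_reach_trans[OF EO_reach_trans[OF x(1) y(1) u] y'(1) u] .
  have "bform n y' y' = 0"
    using EO_reach_bform_self[OF two u_y' u] bform_self[OF two, of n u] assms(5) by simp
  then show ?thesis
    using EO_reach_trans[OF u_y' EO_reach_unit_vec_1[OF two n EO_reach_dim[OF u_y'] _ y'(2)] u] by blast
qed

lemma mult_mat_vec_in_ideal:
  assumes "is_ideal I" "A \<in> carrier_mat m m" "dim_vec v = m" "\<forall>j<m. v $ j \<in> I" "k < m"
  shows "(A *\<^sub>v v) $ k \<in> I"
proof -
  have "(A *\<^sub>v v) $ k = (\<Sum>j\<in>{0..<m}. A $$ (k,j) * v $ j)"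
    using assms by (simp add: scalar_prod_def row_def)
  also have "\<dots> \<in> I" using assms by (intro ideal_sum ideal_mult_left) auto
  finally show ?thesis .
qed

lemma esd_EO_rel_if_conjugate:
  assumes "two_invertible TYPE('a::comm_ring_1)" "dim_vec u = 2*n+1" "dim_vec v = 2*n+1"
    and g: "g \<in> EO n UNIV" and "esd n (g *\<^sub>v u) (g *\<^sub>v v) \<in> EO_rel n I"
  shows "esd n u (v :: 'a vec) \<in> EO_rel n I"
proof -
  obtain h where h: "h \<in> EO n UNIV" "g * h = 1\<^sub>m (2*n+1)" "h * g = 1\<^sub>m (2*n+1)"
    using EO_invertible[OF assms(1) g] by blast
  have carrier: "g \<in> carrier_mat (2*n+1) (2*n+1)" "h \<in> carrier_mat (2*n+1) (2*n+1)"
    using g h(1) EO_carrier by blast+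
  have "h * esd n (g *\<^sub>v u) (g *\<^sub>v v) * g \<in> EO_rel n I"
    using EO_rel_conjugate[OF assms(5) h(1) carrier(1) h(3,2)] .
  moreover have "h * esd n (g *\<^sub>v u) (g *\<^sub>v v) * g = esd n (h *\<^sub>v (g *\<^sub>v u)) (h *\<^sub>v (g *\<^sub>v v))"
    using EO_isometry[OF assms(1) h(1)] carrier by (intro esd_conjugate[OF _ _ carrier(2,1) h(3)]) auto
  moreover have "h *\<^sub>v (g *\<^sub>v u) = u" "h *\<^sub>v (g *\<^sub>v v) = v"
    using assoc_mult_mat_vec[OF carrier(2,1) carrier_vecI[OF assms(2)]]
      assoc_mult_mat_vec[OF carrier(2,1) carrier_vecI[OF assms(3)]] h(3)
      one_mult_mat_vec[OF carrier_vecI[OF assms(2)]] one_mult_mat_vec[OF carrier_vecI[OF assms(3)]]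
    by simp_all
  ultimately show ?thesis by simp
qed

theorem mainTheorem9:
  fixes I :: "'a::comm_ring_1 set" and n :: nat and u v :: "'a vec"
  assumes "semilocal TYPE('a)"
    and "two_invertible TYPE('a)"
    and "is_ideal I"
    and "n \<ge> 3"
    and "unimodular (2*n+1) u"
    and "qform n u = 0"
    and "dim_vec v = 2*n+1"
    and "\<forall>i < 2*n+1. v $ i \<in> I"
    and "bform n u v = 0"
  shows "esd n u v \<in> EO_rel n I"
proof -
  have u: "dim_vec u = 2*n+1" using assms(5) unfolding unimodular_def by blast
  obtain g where g: "g \<in> EO n UNIV" "g *\<^sub>v u = unit_vec (2*n+1) 1"
    using EO_reach_isotropic_unimodular[OF _ assms(2) _ assms(5,6)] assms(1,4)
    unfolding semilocal_def EO_reach_def by auto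
  let ?v = "g *\<^sub>v v"
  have v: "dim_vec ?v = 2*n+1" "\<forall>k<2*n+1. ?v $ k \<in> I"
    using EO_carrier[OF g(1)] mult_mat_vec_in_ideal[OF assms(3) EO_carrier[OF g(1)] assms(7,8)] by simp_all
  have "?v $ partner 1 = 0"
    using EO_isometry[OF assms(2) g(1) u assms(7)] assms(9) g(2) bform_unit_left[OF refl v(1), of 1] assms(4)
    by (simp add: weight_def)
  then have "esd n (g *\<^sub>v u) ?v \<in> EO_rel n I"
    using esd_unit_EO_rel[OF assms(2,3) _ _ v] assms(4) g(2) by simp
  then show ?thesis by (rule esd_EO_rel_if_conjugate[OF assms(2) u assms(7) g(1)])
qed

end
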